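(* Let $n,m$ be positive integers, $u\in\mathbb{C}$, and $a,b,c\in\mathbb{Z}$ with $\nu:=a-b\in\{-n,-n+2,\dots,n\}$ and $\mu:=b-c\in\{-m,-m+2,\dots,m\}$. Put $m_+=\tfrac12(m-\mu)$, $m_-=\tfrac12(m+\mu)$, $x=a+w$. Then $$L\,\psi^{(n)}(z|0)^{a}_{b}=\sum_{b'}W^{(n,m)}\left(\begin{smallmatrix} a& b\\ b'& c\end{smallmatrix}\middle|u\right)\psi^{(n)}(z|0)^{b'}_{c},$$ the sum over $b'\in\mathbb{Z}$ with $\mu':=b'-a\in\{-m,-m+2,\dots,m\}$, where $$W^{(n,m)}\left(\begin{smallmatrix} a& b\\ b'& c\end{smallmatrix}\middle|u\right)=\sum_{\Sigma}\frac{(x+\mu')\binom{m_-}{\varkappa_+}\binom{m_+}{\rho_+}(\theta_1)^-_{\varkappa_+}(\theta_2)^+_{\varkappa_+}(\theta_3)^-_{\varkappa_-}(\theta_4)^-_{\varkappa_-}(\theta_5)^-_{\rho_+}(\theta_6)^+_{\rho_+}(\theta_7)^-_{\rho_-}(\theta_8)^-_{\rho_-}}{x\,(x+1)^+_{\varkappa_+}(x-1)^-_{\varkappa_-}(x+\Sigma+1)^+_{\rho_+}(x+\Sigma-1)^-_{\rho_-}},$$ the sum running over $\Sigma\in\{-m_-,-m_-+2,\dots,m_-\}$ with $|\mu'-\Sigma|\le m_+$, and where $\varkappa_\pm=\tfrac12(m_-\pm\Sigma)$, $\rho_\pm=\tfrac12(m_+\pm(\mu'-\Sigma))$, $\theta_1=\tfrac12(n-\nu)$,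 $\theta_2=-u+c+m_--\tfrac12(n-\nu)+w$, $\theta_3=u-m_++\tfrac12(n+\nu)$, $\theta_4=c+\mu+\tfrac12(n+\nu)+w$, $\theta_5=u+\tfrac12(n-\nu-\Sigma-m_-)$, $\theta_6=c+\mu-\tfrac12(n-\nu-\Sigma+m_-)+w$, $\theta_7=\tfrac12(n+\nu+\Sigma+m_-)$, $\theta_8=u+c+\mu+\tfrac12(n+\nu+\Sigma-m_-)+w$. Moreover, the coefficients in this expansion are uniquely determined (the polynomials $\psi^{(n)}(z|0)^{b'}_c$, $b'\in\{c-n,c-n+2,\dots,c+n\}$, being linearly independent).
   Context: Fix $\alpha\in\mathbb{C}\setminus\{0\}$, $s,t\in\mathbb{C}$, $w=\tfrac12(s+t)\notin\mathbb{Z}$. $[\Delta_\pm f](z)=\tfrac12(f(z+\alpha)\pm f(z-\alpha))$; $z$ acts by multiplication on $\mathbb{C}[z]$. Polynomials: for a positive integer $n$, integers $a,b$, with $n_+=\tfrac12(n+b-a)$, $n_-=\tfrac12(n-b+a)$, if $n_\pm$ are nonnegative integers then $\psi^{(n)}(z|u)^a_b=(-1)^n\prod_{p=1}^{n_+}[z-\alpha(u+n-a-2p+1-t)]\prod_{q=1}^{n_-}[z-\alpha(u+n+a-2q+1+s)]$, otherwise $\psi^{(n)}(z|u)^a_b=0$. Ordered product: $\prod_{l=N_1}^{\overset{N_2}{\longleftarrow}}A_l=A_{N_2}\cdots A_{N_1}$ (empty $=$ identity). For $m_\pm=\tfrac12(m\pm(c-b))$ the operator $L=L_m(u,b,c)$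 on $\mathbb{C}[z]$ is $L=(-\alpha)^{-m}\prod_{l=0}^{\overset{m_+-1}{\longleftarrow}}\big\{[\alpha(-u+\tfrac12(m-b-c)-t)-z]\Delta_--\alpha(u-l)\Delta_+\big\}\prod_{l'=0}^{\overset{m_--1}{\longleftarrow}}\big\{[\alpha(-u+\tfrac12(m+b+c)+s)-z]\Delta_--\alpha(u-m_+-l')\Delta_+\big\}$. Rising/falling products: $(y)^\pm_k=\prod_{j=0}^{k-1}(y\pm j)$ (empty $=1$). *)

theory Defs
  imports "HOL-Computational_Algebra.Polynomial" Complex_Main
begin

definition Dplus :: "complex \<Rightarrow> complex poly \<Rightarrow> complex poly" where
  "Dplus \<alpha> f = smult (1/2) (pcompose f [:\<alpha>, 1:] + pcompose f [:-\<alpha>, 1:])"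

definition Dminus :: "complex \<Rightarrow> complex poly \<Rightarrow> complex poly" where
  "Dminus \<alpha> f = smult (1/2) (pcompose f [:\<alpha>, 1:] - pcompose f [:-\<alpha>, 1:])"

definition rising :: "complex \<Rightarrow> nat \<Rightarrow> complex" where
  "rising y k = (\<Prod>j<k. (y + of_nat j))"

definition falling :: "complex \<Rightarrow> nat \<Rightarrow> complex" where
  "falling y k = (\<Prod>j<k. (y - of_nat j))"

definition psi :: "complex \<Rightarrow> complex \<Rightarrow> complex \<Rightarrow> nat \<Rightarrow> complex \<Rightarrow> int \<Rightarrow> int \<Rightarrow> complex poly" where
  "psi \<alpha> s t n u a b =
     (if (int n + b - a) mod 2 = 0 \<and> 0 \<le> int n + b - a \<and> 0 \<le> int n - b + a then
        smult ((-1) ^ n)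
          ((\<Prod>p\<in>{1..nat ((int n + b - a) div 2)}.
              [: - (\<alpha> * (u + of_nat n - of_int a - 2 * of_nat p + 1 - t)), 1 :]) *
           (\<Prod>q\<in>{1..nat ((int n - b + a) div 2)}.
              [: - (\<alpha> * (u + of_nat n + of_int a - 2 * of_nat q + 1 + s)), 1 :]))
      else 0)"

fun opprod :: "(nat \<Rightarrow> 'a \<Rightarrow> 'a) \<Rightarrow> nat \<Rightarrow> 'a \<Rightarrow> 'a" where
  "opprod A 0 f = f"
| "opprod A (Suc k) f = A k (opprod A k f)"

definition Lop :: "complex \<Rightarrow> complex \<Rightarrow> complex \<Rightarrow> nat \<Rightarrow> complex \<Rightarrow> int \<Rightarrow> int
                   \<Rightarrow> complex poly \<Rightarrow> complex poly" where
  "Lop \<alpha> s t m u b c f =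
    (let mp = nat ((int m + (c - b)) div 2);
         mm = nat ((int m - (c - b)) div 2);
         A = (\<lambda>l g. [: \<alpha> * (- u + of_int (int m - b - c) / 2 - t), -1 :] * Dminus \<alpha> g
                     - smult (\<alpha> * (u - of_nat l)) (Dplus \<alpha> g));
         B = (\<lambda>l' g. [: \<alpha> * (- u + of_int (int m + b + c) / 2 + s), -1 :] * Dminus \<alpha> g
                     - smult (\<alpha> * (u - of_nat mp - of_nat l')) (Dplus \<alpha> g))
     in smult (inverse ((-\<alpha>) ^ m)) (opprod A mp (opprod B mm f)))"

definition Wcoef :: "complex \<Rightarrow> complex \<Rightarrow> nat \<Rightarrow> nat \<Rightarrow> int \<Rightarrow> int \<Rightarrow> int \<Rightarrow> int \<Rightarrow> complex \<Rightarrow> complex" where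
  "Wcoef s t n m a b b' c u =
    (let w = (s + t) / 2;
         \<nu> = a - b; \<mu> = b - c; \<mu>' = b' - a;
         mp = nat ((int m - \<mu>) div 2);
         mm = nat ((int m + \<mu>) div 2);
         x = of_int a + w
     in (\<Sum>\<Sigma>\<in>{\<Sigma>::int. - int mm \<le> \<Sigma> \<and> \<Sigma> \<le> int mm \<and> (\<Sigma> + int mm) mod 2 = 0
                       \<and> \<bar>\<mu>' - \<Sigma>\<bar> \<le> int mp}.
          (let kp = nat ((int mm + \<Sigma>) div 2);
               km = nat ((int mm - \<Sigma>) div 2);
               rp = nat ((int mp + (\<mu>' - \<Sigma>)) div 2);
               rm = nat ((int mp - (\<mu>' - \<Sigma>)) div 2);
               \<theta>1 = of_int (int n - \<nu>) / 2;
               \<theta>2 = - u + of_int c + of_nat mm - of_int (int n - \<nu>) / 2 + w;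
               \<theta>3 = u - of_nat mp + of_int (int n + \<nu>) / 2;
               \<theta>4 = of_int c + of_int \<mu> + of_int (int n + \<nu>) / 2 + w;
               \<theta>5 = u + of_int (int n - \<nu> - \<Sigma> - int mm) / 2;
               \<theta>6 = of_int c + of_int \<mu> - of_int (int n - \<nu> - \<Sigma> + int mm) / 2 + w;
               \<theta>7 = of_int (int n + \<nu> + \<Sigma> + int mm) / 2;
               \<theta>8 = u + of_int c + of_int \<mu> + of_int (int n + \<nu> + \<Sigma> - int mm) / 2 + w
           in ((x + of_int \<mu>') * of_nat (mm choose kp) * of_nat (mp choose rp)
                * falling \<theta>1 kp * rising \<theta>2 kp * falling \<theta>3 km * falling \<theta>4 km
                * falling \<theta>5 rp * rising \<theta>6 rp * falling \<theta>7 rm * falling \<theta>8 rm)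
              / (x * rising (x + 1) kp * falling (x - 1) km
                 * rising (x + of_int \<Sigma> + 1) rp * falling (x + of_int \<Sigma> - 1) rm))))"

end

theory Submission
  imports Defs
begin

text \<open>The polynomial \<open>psi \<alpha> s t n 0 a b\<close> is, up to sign, a product of two arithmetic
  progressions of linear factors with step \<open>2\<alpha>\<close>. Each factor of \<open>Lop\<close> acts on such a product by a
  two-term rule: after cancelling the common part of the two translates, what remains is a quadratic
  that vanishes at one root and is expanded along the two roots at the ends of the progressions.
  Applying first the \<open>m\<^sub>-\<close> and then the \<open>m\<^sub>+\<close> factors is thus a weighted walk on a lattice; the
  path weights satisfy a Pascal-type recurrence whose solution is a product of rising and falling
  factorials, and the products of the weights of the two walks are exactly the summands of \<open>W\<close>
  after reindexing by \<open>\<Sigma>\<close> and \<open>\<mu>'\<close>. Uniqueness holds because evaluating the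
  \<open>psi \<alpha> s t n 0 b' c\<close> at the points \<open>\<alpha>(1 - c - t + 2k)\<close> gives a triangular matrix, whose
  diagonal does not vanish since \<open>w \<notin> \<int>\<close>.\<close>

definition prog_poly :: "complex \<Rightarrow> complex \<Rightarrow> nat \<Rightarrow> complex poly" where
  "prog_poly \<alpha> c N = (\<Prod>i<N. [:-(\<alpha> * (c + 2 * of_nat i)), 1:])"

lemma prog_poly_0 [simp]: "prog_poly \<alpha> c 0 = 1"
  by (simp add: prog_poly_def)

lemma prog_poly_Suc_left: "prog_poly \<alpha> c (Suc N) = [:-(\<alpha> * c), 1:] * prog_poly \<alpha> (c + 2) N"
  unfolding prog_poly_def prod.lessThan_Suc_shift by (simp add: algebra_simps)

lemma prog_poly_Suc_right:
  "prog_poly \<alpha> c (Suc N) = prog_poly \<alpha> c N * [:-(\<alpha> * (c + 2 * of_nat N)), 1:]"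
  unfolding prog_poly_def by simp

lemma prog_poly_shift_factor:
  "prog_poly \<alpha> (c - 1) N * [:-(\<alpha> * (c - 1 + 2 * of_nat N)), 1:]
     = [:-(\<alpha> * (c - 1)), 1:] * prog_poly \<alpha> (c + 1) N"
  using prog_poly_Suc_left[of \<alpha> "c - 1" N] prog_poly_Suc_right[of \<alpha> "c - 1" N]
  by (simp add: algebra_simps)

lemma poly_prog_poly: "poly (prog_poly \<alpha> c N) z = (\<Prod>i<N. z - \<alpha> * (c + 2 * of_nat i))"
  by (simp add: prog_poly_def poly_prod)

lemma pcompose_prog_poly_plus: "prog_poly \<alpha> c N \<circ>\<^sub>p [:\<alpha>, 1:] = prog_poly \<alpha> (c - 1) N"
  unfolding prog_poly_def pcompose_prod by (intro prod.cong refl) (simp add: pcompose_pCons algebra_simps)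

lemma pcompose_prog_poly_minus: "prog_poly \<alpha> c N \<circ>\<^sub>p [:-\<alpha>, 1:] = prog_poly \<alpha> (c + 1) N"
  unfolding prog_poly_def pcompose_prod by (intro prod.cong refl) (simp add: pcompose_pCons algebra_simps)

definition shift_op :: "complex \<Rightarrow> complex \<Rightarrow> complex \<Rightarrow> complex poly \<Rightarrow> complex poly" where
  "shift_op \<alpha> \<beta> \<gamma> f = [:\<beta>, -1:] * Dminus \<alpha> f - smult \<gamma> (Dplus \<alpha> f)"

lemma shift_op_add: "shift_op \<alpha> \<beta> \<gamma> (f + g) = shift_op \<alpha> \<beta> \<gamma> f + shift_op \<alpha> \<beta> \<gamma> g"
  by (simp add: shift_op_def Dminus_def Dplus_def pcompose_add algebra_simps smult_add_right
      smult_diff_right)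

lemma shift_op_smult: "shift_op \<alpha> \<beta> \<gamma> (smult c f) = smult c (shift_op \<alpha> \<beta> \<gamma> f)"
  by (simp add: shift_op_def Dminus_def Dplus_def pcompose_smult algebra_simps smult_add_right
      smult_diff_right)

lemma shift_op_mult_eq:
  assumes "(f \<circ>\<^sub>p [:\<alpha>, 1:]) * E = L * (f \<circ>\<^sub>p [:-\<alpha>, 1:])"
  shows "shift_op \<alpha> \<beta> \<gamma> f * E
    = (f \<circ>\<^sub>p [:-\<alpha>, 1:]) * ([:\<beta>, -1:] * smult (1/2) (L - E) - smult \<gamma> (smult (1/2) (L + E)))"
proof -
  have smult_const: "smult c p = [:c:] * p" for c and p :: "complex poly"
    by simp
  show ?thesis
    using assms unfolding shift_op_def Dminus_def Dplus_def smult_const by algebra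
qed

text \<open>The left-hand side vanishes at \<open>z = q\<close>, so it is \<open>z - q\<close> times a linear polynomial,
  which is then expanded in the basis \<open>z - r\<^sub>1, z - r\<^sub>2\<close>.\<close>
lemma linear_factor_split:
  fixes \<beta> \<gamma> p q r1 r2 :: complex
  assumes "\<beta> + \<gamma> = q" and "r1 \<noteq> r2"
  shows "[:\<beta>, -1:] * smult (1/2) ([:-p, 1:] * [:-q, 1:] - [:-r1, 1:] * [:-r2, 1:])
           - smult \<gamma> (smult (1/2) ([:-p, 1:] * [:-q, 1:] + [:-r1, 1:] * [:-r2, 1:]))
         = smult ((r1 - p) * (\<beta> - \<gamma> - r1) / (2 * (r1 - r2))) ([:-q, 1:] * [:-r2, 1:])
           + smult ((\<beta> - \<gamma> - r2) * (r2 - p) / (2 * (r2 - r1))) ([:-q, 1:] * [:-r1, 1:])"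
proof -
  obtain d where d: "r1 = r2 + d" "d \<noteq> 0"
    using assms(2) by (metis add_diff_cancel_left' diff_eq_eq eq_iff_diff_eq_0)
  have \<beta>: "\<beta> = q - \<gamma>"
    using assms(1) by (simp add: algebra_simps)
  show ?thesis
    by (intro poly_eq_poly_eq_iff[THEN iffD1] ext) (simp add: \<beta> d field_simps)
qed

lemma pcompose_prog_poly_mult_translates:
  fixes \<alpha> c d :: complex and p q :: nat
  defines "r1 \<equiv> \<alpha> * (c - 1 + 2 * of_nat p)" and "r2 \<equiv> \<alpha> * (d - 1 + 2 * of_nat q)"
  shows "((prog_poly \<alpha> c p * prog_poly \<alpha> d q) \<circ>\<^sub>p [:\<alpha>, 1:]) * ([:-r1, 1:] * [:-r2, 1:])
    = ([:-(\<alpha> * (c - 1)), 1:] * [:-(\<alpha> * (d - 1)), 1:]) * ((prog_poly \<alpha> c p * prog_poly \<alpha> d q) \<circ>\<^sub>p [:-\<alpha>, 1:])"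
proof -
  have "((prog_poly \<alpha> c p * prog_poly \<alpha> d q) \<circ>\<^sub>p [:\<alpha>, 1:]) * ([:-r1, 1:] * [:-r2, 1:])
      = (prog_poly \<alpha> (c - 1) p * [:-r1, 1:]) * (prog_poly \<alpha> (d - 1) q * [:-r2, 1:])"
    by (simp only: pcompose_mult pcompose_prog_poly_plus mult_ac)
  also have "\<dots> = ([:-(\<alpha> * (c - 1)), 1:] * [:-(\<alpha> * (d - 1)), 1:])
      * (prog_poly \<alpha> (c + 1) p * prog_poly \<alpha> (d + 1) q)"
    unfolding r1_def r2_def prog_poly_shift_factor by (simp only: mult_ac)
  finally show ?thesis
    by (simp only: pcompose_mult pcompose_prog_poly_minus)
qed

lemma shift_op_prog_poly_mult:
  fixes \<alpha> \<beta> \<gamma> c d :: complex and p q :: nat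
  defines "r1 \<equiv> \<alpha> * (c - 1 + 2 * of_nat p)" and "r2 \<equiv> \<alpha> * (d - 1 + 2 * of_nat q)"
  assumes "\<beta> + \<gamma> = \<alpha> * (d - 1)" and "r1 \<noteq> r2"
  shows "shift_op \<alpha> \<beta> \<gamma> (prog_poly \<alpha> c p * prog_poly \<alpha> d q)
    = smult ((r1 - \<alpha> * (c - 1)) * (\<beta> - \<gamma> - r1) / (2 * (r1 - r2)))
        (prog_poly \<alpha> (c + 1) (p - 1) * prog_poly \<alpha> (d - 1) (Suc q))
    + smult ((\<beta> - \<gamma> - r2) * (r2 - \<alpha> * (c - 1)) / (2 * (r2 - r1)))
        (prog_poly \<alpha> (c + 1) p * prog_poly \<alpha> (d - 1) q)"
    (is "_ = smult ?C1 ?g1 + smult ?C2 ?g2")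
proof -
  define E1 where "E1 = [:-r1, 1:]"
  define E2 where "E2 = [:-r2, 1:]"
  define L2 where "L2 = [:-(\<alpha> * (d - 1)), 1:]"
  define F where "F = prog_poly \<alpha> c p * prog_poly \<alpha> d q"
  define Fm where "Fm = prog_poly \<alpha> (c + 1) p * prog_poly \<alpha> (d + 1) q"
  have Fm_eq: "F \<circ>\<^sub>p [:-\<alpha>, 1:] = Fm"
    by (simp add: F_def Fm_def pcompose_mult pcompose_prog_poly_minus)
  from shift_op_mult_eq[OF pcompose_prog_poly_mult_translates[of \<alpha> c p d q, folded F_def], of \<beta> \<gamma>]
  have lhs: "shift_op \<alpha> \<beta> \<gamma> F * (E1 * E2) = Fm * (smult ?C1 (L2 * E2) + smult ?C2 (L2 * E1))"
    using linear_factor_split[OF assms(3,4), of "\<alpha> * (c - 1)"]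
    by (simp add: Fm_eq L2_def E1_def E2_def r1_def r2_def)
  have g1: "smult ?C1 ?g1 * (E1 * E2) = smult ?C1 (Fm * (L2 * E2))"
  proof (cases p)
    case 0
    then show ?thesis by (simp add: r1_def)
  next
    case (Suc p')
    have E1_Suc: "prog_poly \<alpha> (c + 1) (p - 1) * E1 = prog_poly \<alpha> (c + 1) p"
      using prog_poly_Suc_right[of \<alpha> "c + 1" p'] by (simp add: Suc E1_def r1_def algebra_simps)
    have L2_Suc: "prog_poly \<alpha> (d - 1) (Suc q) = L2 * prog_poly \<alpha> (d + 1) q"
      using prog_poly_Suc_left[of \<alpha> "d - 1" q] unfolding L2_def by (simp add: add_ac)
    have "?g1 * (E1 * E2) = (prog_poly \<alpha> (c + 1) (p - 1) * E1) * prog_poly \<alpha> (d - 1) (Suc q) * E2"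
      by (simp only: ac_simps)
    also have "\<dots> = Fm * (L2 * E2)"
      unfolding E1_Suc L2_Suc by (simp add: Fm_def ac_simps)
    finally have "?g1 * (E1 * E2) = Fm * (L2 * E2)" .
    then show ?thesis
      by (simp only: mult_smult_left)
  qed
  have "prog_poly \<alpha> (d - 1) q * E2 = L2 * prog_poly \<alpha> (d + 1) q"
    using prog_poly_shift_factor[of \<alpha> d q] by (simp add: E2_def L2_def r2_def)
  then have g2: "?g2 * (E1 * E2) = Fm * (L2 * E1)"
    by (simp add: Fm_def ac_simps)
  have "(smult ?C1 ?g1 + smult ?C2 ?g2) * (E1 * E2)
      = smult ?C1 ?g1 * (E1 * E2) + smult ?C2 (?g2 * (E1 * E2))"
    by (simp only: distrib_right mult_smult_left)
  also have "\<dots> = shift_op \<alpha> \<beta> \<gamma> F * (E1 * E2)"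
    unfolding lhs g1 g2 by (simp only: mult_smult_right distrib_left)
  finally have "(smult ?C1 ?g1 + smult ?C2 ?g2) * (E1 * E2) = shift_op \<alpha> \<beta> \<gamma> F * (E1 * E2)" .
  moreover have "E1 * E2 \<noteq> 0"
    by (simp add: E1_def E2_def)
  ultimately show ?thesis
    by (simp add: F_def)
qed

lemma shift_op_prog_poly_mult':
  fixes \<alpha> \<beta> \<gamma> c d :: complex and p q :: nat
  defines "r1 \<equiv> \<alpha> * (c - 1 + 2 * of_nat p)" and "r2 \<equiv> \<alpha> * (d - 1 + 2 * of_nat q)"
  assumes "\<beta> + \<gamma> = \<alpha> * (c - 1)" and "r1 \<noteq> r2"
  shows "shift_op \<alpha> \<beta> \<gamma> (prog_poly \<alpha> c p * prog_poly \<alpha> d q)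
    = smult ((\<beta> - \<gamma> - r1) * (r1 - \<alpha> * (d - 1)) / (2 * (r1 - r2)))
        (prog_poly \<alpha> (c - 1) p * prog_poly \<alpha> (d + 1) q)
    + smult ((r2 - \<alpha> * (d - 1)) * (\<beta> - \<gamma> - r2) / (2 * (r2 - r1)))
        (prog_poly \<alpha> (c - 1) (Suc p) * prog_poly \<alpha> (d + 1) (q - 1))"
proof -
  have "\<alpha> * (d - 1 + 2 * of_nat q) \<noteq> \<alpha> * (c - 1 + 2 * of_nat p)"
    using assms(4) unfolding r1_def r2_def by argo
  from shift_op_prog_poly_mult[where c = d and d = c and p = q and q = p, OF assms(3) this]
  show ?thesis
    unfolding r1_def r2_def by (simp add: ac_simps)
qed

lemma not_Ints_add_of_int:
  fixes w :: "'a :: ring_1"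
  assumes "w \<notin> \<int>"
  shows "w + of_int k \<notin> \<int>"
proof
  assume "w + of_int k \<in> \<int>"
  then have "w + of_int k - of_int k \<in> \<int>"
    by (intro Ints_diff) auto
  with assms show False
    by simp
qed

lemma not_Ints_add_of_int_neq_0:
  fixes w :: "'a :: ring_1"
  shows "w \<notin> \<int> \<Longrightarrow> w + of_int k \<noteq> 0"
  using not_Ints_add_of_int[of w k] by force

lemma psi_eq_prog_poly:
  assumes "int n + b - a = 2 * int p" and "int n - b + a = 2 * int q"
    and "c = 1 - of_int b - t" and "d = of_int b + 1 + s"
  shows "psi \<alpha> s t n 0 a b = smult ((-1) ^ n) (prog_poly \<alpha> c p * prog_poly \<alpha> d q)"
proof -
  have reverse: "(\<Prod>k\<in>{1..N}. f k) = (\<Prod>i<N. f (N - i))" for f :: "nat \<Rightarrow> complex poly" and N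
    by (rule prod.reindex_bij_witness[of _ "\<lambda>k. N - k" "\<lambda>i. N - i"]) auto
  have p: "2 * (of_nat p :: complex) = of_nat n + of_int b - of_int a"
    and q: "2 * (of_nat q :: complex) = of_nat n - of_int b + of_int a"
    using arg_cong[OF assms(1), of "of_int :: int \<Rightarrow> complex"]
      arg_cong[OF assms(2), of "of_int :: int \<Rightarrow> complex"] by simp_all
  have "(\<Prod>k\<in>{1..p}. [:- (\<alpha> * (0 + of_nat n - of_int a - 2 * of_nat k + 1 - t)), 1:])
      = prog_poly \<alpha> (1 - of_int b - t) p"
    unfolding reverse prog_poly_def
  proof (intro prod.cong refl)
    fix i assume "i \<in> {..<p}"
    then have diff: "2 * of_nat (p - i) = of_nat n + of_int b - of_int a - 2 * (of_nat i :: complex)"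
      using p by (simp add: algebra_simps)
    show "[:- (\<alpha> * (0 + of_nat n - of_int a - 2 * of_nat (p - i) + 1 - t)), 1:]
        = [:- (\<alpha> * (1 - of_int b - t + 2 * of_nat i)), 1:]"
      unfolding diff by (simp add: algebra_simps)
  qed
  moreover have "(\<Prod>k\<in>{1..q}. [:- (\<alpha> * (0 + of_nat n + of_int a - 2 * of_nat k + 1 + s)), 1:])
      = prog_poly \<alpha> (of_int b + 1 + s) q"
    unfolding reverse prog_poly_def
  proof (intro prod.cong refl)
    fix i assume "i \<in> {..<q}"
    then have diff: "2 * of_nat (q - i) = of_nat n - of_int b + of_int a - 2 * (of_nat i :: complex)"
      using q by (simp add: algebra_simps)
    show "[:- (\<alpha> * (0 + of_nat n + of_int a - 2 * of_nat (q - i) + 1 + s)), 1:]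
        = [:- (\<alpha> * (of_int b + 1 + s + 2 * of_nat i)), 1:]"
      unfolding diff by (simp add: algebra_simps)
  qed
  moreover have "nat ((int n + b - a) div 2) = p" and "nat ((int n - b + a) div 2) = q"
    using assms by simp_all
  ultimately show ?thesis
    using assms(1,2) by (simp add: psi_def assms(3,4))
qed

lemma psi_eq_0:
  assumes "\<not> (\<bar>a - b\<bar> \<le> int n \<and> (a - b + int n) mod 2 = 0)"
  shows "psi \<alpha> s t n u a b = 0"
proof -
  have "\<not> ((int n + b - a) mod 2 = 0 \<and> 0 \<le> int n + b - a \<and> 0 \<le> int n - b + a)"
    using assms unfolding abs_le_iff by presburger
  then show ?thesis
    by (simp add: psi_def)
qed

lemma psi_root_gap:
  fixes \<alpha> s t :: complex
  assumes "\<alpha> \<noteq> 0" and "(s + t) / 2 \<notin> \<int>"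
    and "int n + b - a = 2 * int p" and "int n - b + a = 2 * int q"
  defines "r1 \<equiv> \<alpha> * ((1 - of_int b - t) - 1 + 2 * of_nat p)"
    and "r2 \<equiv> \<alpha> * ((of_int b + 1 + s) - 1 + 2 * of_nat q)"
    and "x \<equiv> of_int a + (s + t) / 2"
  shows "r1 - r2 = - 2 * \<alpha> * x" and "r2 - r1 = 2 * \<alpha> * x" and "x \<noteq> 0" and "r1 \<noteq> r2"
proof -
  have p: "2 * (of_nat p :: complex) = of_nat n + of_int b - of_int a"
    and q: "2 * (of_nat q :: complex) = of_nat n - of_int b + of_int a"
    using arg_cong[OF assms(3), of "of_int :: int \<Rightarrow> complex"]
      arg_cong[OF assms(4), of "of_int :: int \<Rightarrow> complex"] by simp_all
  show gap: "r1 - r2 = - 2 * \<alpha> * x"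
    unfolding r1_def r2_def x_def p q by (simp add: field_simps)
  then show "r2 - r1 = 2 * \<alpha> * x"
    by (simp add: algebra_simps)
  show "x \<noteq> 0"
    using not_Ints_add_of_int_neq_0[OF assms(2), of a] by (simp add: x_def add.commute)
  with gap \<open>\<alpha> \<noteq> 0\<close> show "r1 \<noteq> r2"
    by auto
qed

lemma shift_op_psi_lower:
  fixes \<alpha> s t \<beta> g :: complex
  assumes "\<alpha> \<noteq> 0" and "(s + t) / 2 \<notin> \<int>"
    and pq: "int n + b - a = 2 * int p" "int n - b + a = 2 * int q"
    and \<beta>\<gamma>: "\<beta> + \<alpha> * g = \<alpha> * (of_int b + s)"
  defines "x \<equiv> of_int a + (s + t) / 2"
  shows "smult (inverse (-\<alpha>)) (shift_op \<alpha> \<beta> (\<alpha> * g) (psi \<alpha> s t n 0 a b))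
    = smult (of_nat p * (of_int b + (s + t) / 2 - g - of_nat p) / x) (psi \<alpha> s t n 0 (a + 1) (b - 1))
    + smult ((g + of_nat q) * (of_int b + (s + t) / 2 + of_nat q) / x) (psi \<alpha> s t n 0 (a - 1) (b - 1))"
    (is "_ = smult ?C1 _ + smult ?C2 _")
proof -
  define c where "c = 1 - of_int b - t"
  define d where "d = of_int b + 1 + s"
  define g1 where "g1 = prog_poly \<alpha> (c + 1) (p - 1) * prog_poly \<alpha> (d - 1) (Suc q)"
  define g2 where "g2 = prog_poly \<alpha> (c + 1) p * prog_poly \<alpha> (d - 1) q"
  note gap = psi_root_gap[OF assms(1,2) pq, folded c_def d_def x_def]
  have "\<beta> + \<alpha> * g = \<alpha> * (d - 1)"
    using \<beta>\<gamma> by (simp add: d_def)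
  note step = shift_op_prog_poly_mult[OF this gap(4), unfolded gap(1,2), folded g1_def g2_def]
  have \<beta>: "\<beta> = \<alpha> * (of_int b + s) - \<alpha> * g"
    using \<beta>\<gamma> by (simp add: algebra_simps)
  have C1: "inverse (-\<alpha>) * ((\<alpha> * (c - 1 + 2 * of_nat p) - \<alpha> * (c - 1))
      * (\<beta> - \<alpha> * g - \<alpha> * (c - 1 + 2 * of_nat p)) / (2 * (- 2 * \<alpha> * x))) = ?C1"
    and C2: "inverse (-\<alpha>) * ((\<beta> - \<alpha> * g - \<alpha> * (d - 1 + 2 * of_nat q))
      * (\<alpha> * (d - 1 + 2 * of_nat q) - \<alpha> * (c - 1)) / (2 * (2 * \<alpha> * x))) = ?C2"
    using \<open>\<alpha> \<noteq> 0\<close> gap(3) by (simp_all add: \<beta> c_def d_def field_simps)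
  have psi1: "smult ?C1 (smult ((-1) ^ n) g1) = smult ?C1 (psi \<alpha> s t n 0 (a + 1) (b - 1))"
  proof (cases p)
    case 0
    then show ?thesis by simp
  next
    case (Suc p')
    have "psi \<alpha> s t n 0 (a + 1) (b - 1) = smult ((-1) ^ n) g1"
      unfolding g1_def by (rule psi_eq_prog_poly) (use pq Suc in \<open>simp_all add: c_def d_def\<close>)
    then show ?thesis by simp
  qed
  have psi2: "psi \<alpha> s t n 0 (a - 1) (b - 1) = smult ((-1) ^ n) g2"
    unfolding g2_def by (rule psi_eq_prog_poly) (use pq in \<open>simp_all add: c_def d_def\<close>)
  have "smult (inverse (-\<alpha>)) (shift_op \<alpha> \<beta> (\<alpha> * g) (psi \<alpha> s t n 0 a b))
      = smult (inverse (-\<alpha>)) (smult ((-1) ^ n) (shift_op \<alpha> \<beta> (\<alpha> * g) (prog_poly \<alpha> c p * prog_poly \<alpha> d q)))"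
    by (simp only: psi_eq_prog_poly[OF pq c_def d_def] shift_op_smult)
  also have "\<dots> = smult ?C1 (smult ((-1) ^ n) g1) + smult ?C2 (smult ((-1) ^ n) g2)"
    unfolding step C1[symmetric] C2[symmetric] by (simp only: smult_add_right smult_smult mult_ac)
  finally have "smult (inverse (-\<alpha>)) (shift_op \<alpha> \<beta> (\<alpha> * g) (psi \<alpha> s t n 0 a b))
      = smult ?C1 (smult ((-1) ^ n) g1) + smult ?C2 (smult ((-1) ^ n) g2)" .
  then show ?thesis
    unfolding psi1 psi2 .
qed

lemma shift_op_psi_raise:
  fixes \<alpha> s t \<beta> g :: complex
  assumes "\<alpha> \<noteq> 0" and "(s + t) / 2 \<notin> \<int>"
    and pq: "int n + b - a = 2 * int p" "int n - b + a = 2 * int q"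
    and \<beta>\<gamma>: "\<beta> + \<alpha> * g = \<alpha> * (- of_int b - t)"
  defines "x \<equiv> of_int a + (s + t) / 2"
  shows "smult (inverse (-\<alpha>)) (shift_op \<alpha> \<beta> (\<alpha> * g) (psi \<alpha> s t n 0 a b))
    = smult ((g + of_nat p) * (of_int b + (s + t) / 2 - of_nat p) / x) (psi \<alpha> s t n 0 (a + 1) (b + 1))
    + smult (of_nat q * (of_int b + (s + t) / 2 + g + of_nat q) / x) (psi \<alpha> s t n 0 (a - 1) (b + 1))"
    (is "_ = smult ?C1 _ + smult ?C2 _")
proof -
  define c where "c = 1 - of_int b - t"
  define d where "d = of_int b + 1 + s"
  define g1 where "g1 = prog_poly \<alpha> (c - 1) p * prog_poly \<alpha> (d + 1) q"
  define g2 where "g2 = prog_poly \<alpha> (c - 1) (Suc p) * prog_poly \<alpha> (d + 1) (q - 1)"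
  note gap = psi_root_gap[OF assms(1,2) pq, folded c_def d_def x_def]
  have "\<beta> + \<alpha> * g = \<alpha> * (c - 1)"
    using \<beta>\<gamma> by (simp add: c_def)
  note step = shift_op_prog_poly_mult'[OF this gap(4), unfolded gap(1,2), folded g1_def g2_def]
  have \<beta>: "\<beta> = \<alpha> * (- of_int b - t) - \<alpha> * g"
    using \<beta>\<gamma> by (simp add: algebra_simps)
  have C1: "inverse (-\<alpha>) * ((\<beta> - \<alpha> * g - \<alpha> * (c - 1 + 2 * of_nat p))
      * (\<alpha> * (c - 1 + 2 * of_nat p) - \<alpha> * (d - 1)) / (2 * (- 2 * \<alpha> * x))) = ?C1"
    and C2: "inverse (-\<alpha>) * ((\<alpha> * (d - 1 + 2 * of_nat q) - \<alpha> * (d - 1))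
      * (\<beta> - \<alpha> * g - \<alpha> * (d - 1 + 2 * of_nat q)) / (2 * (2 * \<alpha> * x))) = ?C2"
    using \<open>\<alpha> \<noteq> 0\<close> gap(3) by (simp_all add: \<beta> c_def d_def field_simps)
  have psi1: "psi \<alpha> s t n 0 (a + 1) (b + 1) = smult ((-1) ^ n) g1"
    unfolding g1_def by (rule psi_eq_prog_poly) (use pq in \<open>simp_all add: c_def d_def\<close>)
  have psi2: "smult ?C2 (smult ((-1) ^ n) g2) = smult ?C2 (psi \<alpha> s t n 0 (a - 1) (b + 1))"
  proof (cases q)
    case 0
    then show ?thesis by simp
  next
    case (Suc q')
    have "psi \<alpha> s t n 0 (a - 1) (b + 1) = smult ((-1) ^ n) g2"
      unfolding g2_def by (rule psi_eq_prog_poly) (use pq Suc in \<open>simp_all add: c_def d_def\<close>)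
    then show ?thesis by simp
  qed
  have "smult (inverse (-\<alpha>)) (shift_op \<alpha> \<beta> (\<alpha> * g) (psi \<alpha> s t n 0 a b))
      = smult (inverse (-\<alpha>)) (smult ((-1) ^ n) (shift_op \<alpha> \<beta> (\<alpha> * g) (prog_poly \<alpha> c p * prog_poly \<alpha> d q)))"
    by (simp only: psi_eq_prog_poly[OF pq c_def d_def] shift_op_smult)
  also have "\<dots> = smult ?C1 (smult ((-1) ^ n) g1) + smult ?C2 (smult ((-1) ^ n) g2)"
    unfolding step C1[symmetric] C2[symmetric] by (simp only: smult_add_right smult_smult mult_ac)
  finally show ?thesis
    unfolding psi1 psi2 .
qed

lemma additive_sum:
  fixes h :: "'a::ab_group_add \<Rightarrow> 'b::ab_group_add"
  assumes "\<And>f g. h (f + g) = h f + h g"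
  shows "h (\<Sum>i\<in>A. g i) = (\<Sum>i\<in>A. h (g i))"
proof -
  have "h 0 = 0"
    using assms[of 0 0] by simp
  with assms show ?thesis
    using sum_comp_morphism[of h g A] by (simp add: comp_def)
qed

lemma smult_sum_right:
  fixes c :: "'a::comm_ring"
  shows "smult c (\<Sum>i\<in>A. f i) = (\<Sum>i\<in>A. smult c (f i))"
  by (rule additive_sum[of "smult c"]) (rule smult_add_right)

lemma opprod_add:
  "(\<And>l f g. F l (f + g) = F l f + F l g) \<Longrightarrow> opprod F k (f + g) = opprod F k f + opprod F k g"
  by (induction k) simp_all

lemma opprod_smult:
  "(\<And>l c f. F l (smult c f) = smult c (F l f)) \<Longrightarrow> opprod F k (smult c f) = smult c (opprod F k f)"
  by (induction k) simp_all

lemma opprod_scaled: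
  fixes F :: "nat \<Rightarrow> 'a::comm_semiring_1 poly \<Rightarrow> 'a poly"
  shows "(\<And>l c f. F l (smult c f) = smult c (F l f))
    \<Longrightarrow> opprod (\<lambda>l f. smult c (F l f)) k f = smult (c ^ k) (opprod F k f)"
  by (induction k) (simp_all add: mult.commute)

lemma sum_atMost_shift_second:
  fixes U D :: "nat \<Rightarrow> 'a::comm_monoid_add"
  shows "(\<Sum>j\<le>k. U j + D j) = D 0 + (\<Sum>j\<le>k. U j + (if j < k then D (Suc j) else 0))"
proof -
  have "(\<Sum>j\<le>k. if j < k then D (Suc j) else 0) = (\<Sum>j<k. D (Suc j))"
    unfolding lessThan_Suc_atMost[symmetric] sum.lessThan_Suc by simp
  moreover have "(\<Sum>j\<le>k. D j) = D 0 + (\<Sum>j<k. D (Suc j))"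
    unfolding lessThan_Suc_atMost[symmetric] sum.lessThan_Suc_shift ..
  ultimately show ?thesis
    by (simp add: sum.distrib ac_simps)
qed

text \<open>\<open>w i j\<close> is the total weight of the lattice paths from \<open>(0, 0)\<close> to \<open>(i, j)\<close> whose steps
  \<open>(i, j) \<rightarrow> (i, j + 1)\<close> and \<open>(i, j) \<rightarrow> (i + 1, j)\<close> carry the weights \<open>up i j\<close> and \<open>dn i j\<close>.
  The step hypothesis is only needed at points of nonzero weight.\<close>
lemma opprod_lattice_sum:
  fixes F :: "nat \<Rightarrow> 'a::comm_ring_1 poly \<Rightarrow> 'a poly" and Q :: "nat \<Rightarrow> nat \<Rightarrow> 'a poly"
    and w up dn :: "nat \<Rightarrow> nat \<Rightarrow> 'a"
  assumes add: "\<And>l f g. F l (f + g) = F l f + F l g"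
    and smult: "\<And>l c f. F l (smult c f) = smult c (F l f)"
    and step: "\<And>i j. smult (w i j) (F (i + j) (Q i j))
      = smult (w i j) (smult (up i j) (Q i (Suc j)) + smult (dn i j) (Q (Suc i) j))"
    and w_0_0: "w 0 0 = 1"
    and w_0_Suc: "\<And>j. w 0 (Suc j) = w 0 j * up 0 j"
    and w_Suc_0: "\<And>i. w (Suc i) 0 = w i 0 * dn i 0"
    and w_Suc_Suc: "\<And>i j. w (Suc i) (Suc j) = w (Suc i) j * up (Suc i) j + w i (Suc j) * dn i (Suc j)"
  shows "opprod F k (Q 0 0) = (\<Sum>j\<le>k. smult (w (k - j) j) (Q (k - j) j))"
proof (induction k)
  case 0
  then show ?case by (simp add: w_0_0)
next
  case (Suc k)
  define U where "U j = smult (w (k - j) j * up (k - j) j) (Q (k - j) (Suc j))" for j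
  define D where "D j = smult (w (k - j) j * dn (k - j) j) (Q (Suc (k - j)) j)" for j
  have "opprod F (Suc k) (Q 0 0) = (\<Sum>j\<le>k. smult (w (k - j) j) (F k (Q (k - j) j)))"
    using Suc.IH by (simp add: additive_sum[of "F k", OF add] smult)
  also have "\<dots> = (\<Sum>j\<le>k. U j + D j)"
  proof (intro sum.cong refl)
    fix j assume "j \<in> {..k}"
    then have "k = (k - j) + j" by simp
    then show "smult (w (k - j) j) (F k (Q (k - j) j)) = U j + D j"
      using step[of "k - j" j] by (simp add: U_def D_def smult_add_right)
  qed
  also have "\<dots> = D 0 + (\<Sum>j\<le>k. U j + (if j < k then D (Suc j) else 0))"
    by (rule sum_atMost_shift_second)
  also have "\<dots> = (\<Sum>j\<le>Suc k. smult (w (Suc k - j) j) (Q (Suc k - j) j))"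
  proof -
    have "U j + (if j < k then D (Suc j) else 0) = smult (w (k - j) (Suc j)) (Q (k - j) (Suc j))"
      if "j \<le> k" for j
    proof (cases "j < k")
      case True
      then obtain i where "k - j = Suc i" and "k - Suc j = i"
        by (metis Suc_diff_Suc)
      with True show ?thesis
        by (simp add: U_def D_def w_Suc_Suc smult_add_left)
    next
      case False
      with that show ?thesis
        by (simp add: U_def w_0_Suc)
    qed
    then show ?thesis
      unfolding sum.atMost_Suc_shift by (simp add: D_def w_Suc_0)
  qed
  finally show ?case .
qed

lemma falling_0 [simp]: "falling y 0 = 1"
  by (simp add: falling_def)

lemma rising_0 [simp]: "rising y 0 = 1"
  by (simp add: rising_def)

lemma falling_Suc: "falling y (Suc i) = falling y i * (y - of_nat i)"
  by (simp add: falling_def)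

lemma rising_Suc: "rising y (Suc i) = rising y i * (y + of_nat i)"
  by (simp add: rising_def)

lemma falling_of_nat_eq_0: "N < j \<Longrightarrow> falling (of_nat N) j = 0"
  unfolding falling_def by (rule prod_zero) (auto intro!: bexI[of _ N])

lemma rising_not_Ints_neq_0:
  assumes "x \<notin> \<int>"
  shows "rising x j \<noteq> 0"
proof -
  have "x + of_nat i \<noteq> 0" for i
    using not_Ints_add_of_int_neq_0[OF assms, of "int i"] by simp
  then show ?thesis
    by (simp add: rising_def)
qed

lemma falling_not_Ints_neq_0:
  assumes "x \<notin> \<int>"
  shows "falling x j \<noteq> 0"
proof -
  have "x - of_nat i \<noteq> 0" for i
    using not_Ints_add_of_int_neq_0[OF assms, of "- int i"] by simp
  then show ?thesis
    by (simp add: falling_def)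
qed

definition path_weight :: "complex \<Rightarrow> complex \<Rightarrow> complex \<Rightarrow> complex \<Rightarrow> complex \<Rightarrow> nat \<Rightarrow> nat \<Rightarrow> complex"
  where "path_weight x p1 p2 p3 p4 i j = (x + of_nat j - of_nat i) / x * of_nat ((i + j) choose j)
      * falling p1 j * rising p2 j * falling p3 i * falling p4 i / (rising (x + 1) j * falling (x - 1) i)"

definition up_weight :: "complex \<Rightarrow> complex \<Rightarrow> complex \<Rightarrow> nat \<Rightarrow> nat \<Rightarrow> complex"
  where "up_weight x p1 p2 i j = (p1 - of_nat j) * (p2 + of_nat j) / (x + of_nat j - of_nat i)"

definition down_weight :: "complex \<Rightarrow> complex \<Rightarrow> complex \<Rightarrow> nat \<Rightarrow> nat \<Rightarrow> complex"
  where "down_weight x p3 p4 i j = (p3 - of_nat i) * (p4 - of_nat i) / (x + of_nat j - of_nat i)"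

lemma path_weight_0_0: "x \<notin> \<int> \<Longrightarrow> path_weight x p1 p2 p3 p4 0 0 = 1"
  using not_Ints_add_of_int_neq_0[of x 0] by (simp add: path_weight_def)

lemma path_weight_0_Suc:
  assumes "x \<notin> \<int>"
  shows "path_weight x p1 p2 p3 p4 0 (Suc j) = path_weight x p1 p2 p3 p4 0 j * up_weight x p1 p2 0 j"
proof -
  have "x \<noteq> 0" and "x + of_nat j \<noteq> 0" and "x + 1 + of_nat j \<noteq> 0"
    using not_Ints_add_of_int_neq_0[OF assms, of 0] not_Ints_add_of_int_neq_0[OF assms, of "int j"]
      not_Ints_add_of_int_neq_0[OF assms, of "int j + 1"] by (simp_all add: algebra_simps)
  moreover have "rising (x + 1) j \<noteq> 0"
    using not_Ints_add_of_int[OF assms, of 1] by (simp add: rising_not_Ints_neq_0)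
  ultimately show ?thesis
    unfolding path_weight_def up_weight_def falling_Suc rising_Suc
    by (simp add: divide_simps; simp add: algebra_simps)
qed

lemma path_weight_Suc_0:
  assumes "x \<notin> \<int>"
  shows "path_weight x p1 p2 p3 p4 (Suc i) 0 = path_weight x p1 p2 p3 p4 i 0 * down_weight x p3 p4 i 0"
proof -
  have "x \<noteq> 0" and "x - of_nat i \<noteq> 0" and "x - 1 - of_nat i \<noteq> 0"
    using not_Ints_add_of_int_neq_0[OF assms, of 0] not_Ints_add_of_int_neq_0[OF assms, of "- int i"]
      not_Ints_add_of_int_neq_0[OF assms, of "- int i - 1"] by (simp_all add: algebra_simps)
  moreover have "falling (x - 1) i \<noteq> 0"
    using not_Ints_add_of_int[OF assms, of "- 1"] by (simp add: falling_not_Ints_neq_0)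
  ultimately show ?thesis
    unfolding path_weight_def down_weight_def falling_Suc rising_Suc
    by (simp add: divide_simps; simp add: algebra_simps)
qed

text \<open>Pascal's rule, weighted by the prefactor \<open>x + j - i\<close> of \<open>path_weight\<close>.\<close>
lemma binomial_weighted_Pascal:
  "of_nat ((Suc i + Suc j) choose Suc j) * (x + of_nat j - of_nat i)
     = of_nat ((Suc i + j) choose j) * (x + 1 + of_nat j)
       + of_nat ((i + Suc j) choose Suc j) * (x - 1 - of_nat i :: complex)"
proof -
  have pascal: "(Suc i + Suc j) choose Suc j = (Suc (i + j) choose j) + (Suc (i + j) choose Suc j)"
    by (simp add: add_ac)
  have "Suc j * (Suc (j + i) choose Suc j) = Suc i * (Suc (j + i) choose j)"
    by (rule Suc_times_binomial_add)
  then have absorb: "(of_nat j + 1) * of_nat (Suc (i + j) choose Suc j)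
      = (of_nat i + 1) * (of_nat (Suc (i + j) choose j) :: complex)"
    by (metis add.commute of_nat_Suc of_nat_mult)
  have "(A + B) * (x + j' - i') = A * (x + 1 + j') + B * (x - 1 - i')"
    if "(j' + 1) * B = (i' + 1) * A" for A B j' i' :: complex
    using that by (simp add: algebra_simps)
  from this[OF absorb] show ?thesis
    unfolding pascal by (simp add: add_ac)
qed

lemma path_weight_Suc_Suc:
  assumes "x \<notin> \<int>"
  shows "path_weight x p1 p2 p3 p4 (Suc i) (Suc j)
    = path_weight x p1 p2 p3 p4 (Suc i) j * up_weight x p1 p2 (Suc i) j
      + path_weight x p1 p2 p3 p4 i (Suc j) * down_weight x p3 p4 i (Suc j)"
proof -
  have nonzero: "x \<noteq> 0" "x + of_nat j - (1 + of_nat i) \<noteq> 0" "x + (1 + of_nat j) - of_nat i \<noteq> 0"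
    "x + 1 + of_nat j \<noteq> 0" "x - 1 - of_nat i \<noteq> 0"
    using not_Ints_add_of_int_neq_0[OF assms, of 0] not_Ints_add_of_int_neq_0[OF assms, of "int j - 1 - int i"]
      not_Ints_add_of_int_neq_0[OF assms, of "int j + 1 - int i"] not_Ints_add_of_int_neq_0[OF assms, of "int j + 1"]
      not_Ints_add_of_int_neq_0[OF assms, of "- 1 - int i"]
    by (simp_all add: algebra_simps)
  moreover have "rising (x + 1) j \<noteq> 0" and "falling (x - 1) i \<noteq> 0"
    using not_Ints_add_of_int[OF assms, of 1] not_Ints_add_of_int[OF assms, of "- 1"]
    by (simp_all add: rising_not_Ints_neq_0 falling_not_Ints_neq_0)
  moreover define K where "K = falling p1 j * (p1 - of_nat j) * (rising p2 j * (p2 + of_nat j))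
    * (falling p3 i * (p3 - of_nat i)) * (falling p4 i * (p4 - of_nat i)) / (x * rising (x + 1) j * falling (x - 1) i)"
  ultimately have split:
    "path_weight x p1 p2 p3 p4 (Suc i) (Suc j) = K * (of_nat ((Suc i + Suc j) choose Suc j)
        * (x + of_nat j - of_nat i)) / ((x + 1 + of_nat j) * (x - 1 - of_nat i))"
    "path_weight x p1 p2 p3 p4 (Suc i) j * up_weight x p1 p2 (Suc i) j
      = K * of_nat ((Suc i + j) choose j) / (x - 1 - of_nat i)"
    "path_weight x p1 p2 p3 p4 i (Suc j) * down_weight x p3 p4 i (Suc j)
      = K * of_nat ((i + Suc j) choose Suc j) / (x + 1 + of_nat j)"
    unfolding path_weight_def up_weight_def down_weight_def falling_Suc rising_Suc
    by (simp_all add: divide_simps; simp add: algebra_simps)+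
  show ?thesis
    unfolding split binomial_weighted_Pascal using nonzero by (simp add: divide_simps; simp add: algebra_simps)
qed

lemma shift_op_psi_lower_step:
  fixes \<alpha> s t v :: complex
  assumes "\<alpha> \<noteq> 0" and "(s + t) / 2 \<notin> \<int>"
    and pq: "int n + b - a = 2 * int p" "int n - b + a = 2 * int q" and "j \<le> p"
  defines "w \<equiv> (s + t) / 2"
  defines "x \<equiv> of_int a + w"
  shows "smult (inverse (-\<alpha>)) (shift_op \<alpha> (\<alpha> * (of_int b + s - v)) (\<alpha> * (v - of_nat (i + j)))
        (psi \<alpha> s t n 0 (a + int j - int i) (b - int i - int j)))
    = smult (up_weight x (of_nat p) (of_int b - of_nat p + w - v) i j)
        (psi \<alpha> s t n 0 (a + int (Suc j) - int i) (b - int i - int (Suc j)))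
    + smult (down_weight x (v + of_nat q) (of_int b + of_nat q + w) i j)
        (psi \<alpha> s t n 0 (a + int j - int (Suc i)) (b - int (Suc i) - int j))"
proof -
  define a' where "a' = a + int j - int i"
  define b' where "b' = b - int i - int j"
  have "int n + b' - a' = 2 * int (p - j)" and "int n - b' + a' = 2 * int (q + j)"
    using pq \<open>j \<le> p\<close> by (simp_all add: a'_def b'_def)
  moreover have "\<alpha> * (of_int b + s - v) + \<alpha> * (v - of_nat (i + j)) = \<alpha> * (of_int b' + s)"
    by (simp add: b'_def algebra_simps)
  ultimately have step: "smult (inverse (-\<alpha>)) (shift_op \<alpha> (\<alpha> * (of_int b + s - v)) (\<alpha> * (v - of_nat (i + j)))
      (psi \<alpha> s t n 0 a' b'))
    = smult (of_nat (p - j) * (of_int b' + (s + t) / 2 - (v - of_nat (i + j)) - of_nat (p - j))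
        / (of_int a' + (s + t) / 2)) (psi \<alpha> s t n 0 (a' + 1) (b' - 1))
    + smult ((v - of_nat (i + j) + of_nat (q + j)) * (of_int b' + (s + t) / 2 + of_nat (q + j))
        / (of_int a' + (s + t) / 2)) (psi \<alpha> s t n 0 (a' - 1) (b' - 1))"
    by (rule shift_op_psi_lower[OF assms(1,2)])
  have "of_int a' + (s + t) / 2 = x + of_nat j - of_nat i"
    by (simp add: a'_def x_def w_def)
  then have "of_nat (p - j) * (of_int b' + (s + t) / 2 - (v - of_nat (i + j)) - of_nat (p - j))
      / (of_int a' + (s + t) / 2) = up_weight x (of_nat p) (of_int b - of_nat p + w - v) i j"
    and "(v - of_nat (i + j) + of_nat (q + j)) * (of_int b' + (s + t) / 2 + of_nat (q + j))
      / (of_int a' + (s + t) / 2) = down_weight x (v + of_nat q) (of_int b + of_nat q + w) i j"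
    unfolding up_weight_def down_weight_def using \<open>j \<le> p\<close> by (simp_all add: b'_def w_def algebra_simps)
  moreover have "psi \<alpha> s t n 0 (a + int (Suc j) - int i) (b - int i - int (Suc j)) = psi \<alpha> s t n 0 (a' + 1) (b' - 1)"
    and "psi \<alpha> s t n 0 (a + int j - int (Suc i)) (b - int (Suc i) - int j) = psi \<alpha> s t n 0 (a' - 1) (b' - 1)"
    by (simp_all add: a'_def b'_def algebra_simps)
  ultimately show ?thesis
    unfolding a'_def[symmetric] b'_def[symmetric] step by simp
qed

lemma opprod_shift_op_psi_lower:
  fixes \<alpha> s t v :: complex
  assumes "\<alpha> \<noteq> 0" and "(s + t) / 2 \<notin> \<int>"
    and pq: "int n + b - a = 2 * int p" "int n - b + a = 2 * int q"
  defines "w \<equiv> (s + t) / 2"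
  shows "opprod (\<lambda>l f. smult (inverse (-\<alpha>)) (shift_op \<alpha> (\<alpha> * (of_int b + s - v)) (\<alpha> * (v - of_nat l)) f))
      k (psi \<alpha> s t n 0 a b)
    = (\<Sum>j\<le>k. smult (path_weight (of_int a + w) (of_nat p) (of_int b - of_nat p + w - v) (v + of_nat q)
          (of_int b + of_nat q + w) (k - j) j) (psi \<alpha> s t n 0 (a + int j - int (k - j)) (b - int k)))"
proof -
  define Q where "Q = (\<lambda>i j. psi \<alpha> s t n 0 (a + int j - int i) (b - int i - int j))"
  have "of_int a + w \<notin> \<int>"
    using not_Ints_add_of_int[OF assms(2), of a] by (simp add: w_def add.commute)
  then have "opprod (\<lambda>l f. smult (inverse (-\<alpha>)) (shift_op \<alpha> (\<alpha> * (of_int b + s - v)) (\<alpha> * (v - of_nat l)) f))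
      k (Q 0 0)
    = (\<Sum>j\<le>k. smult (path_weight (of_int a + w) (of_nat p) (of_int b - of_nat p + w - v) (v + of_nat q)
          (of_int b + of_nat q + w) (k - j) j) (Q (k - j) j))"
  proof (intro opprod_lattice_sum)
    fix i j
    show "smult (path_weight (of_int a + w) (of_nat p) (of_int b - of_nat p + w - v) (v + of_nat q)
          (of_int b + of_nat q + w) i j)
        (smult (inverse (-\<alpha>)) (shift_op \<alpha> (\<alpha> * (of_int b + s - v)) (\<alpha> * (v - of_nat (i + j))) (Q i j)))
      = smult (path_weight (of_int a + w) (of_nat p) (of_int b - of_nat p + w - v) (v + of_nat q)
          (of_int b + of_nat q + w) i j)
        (smult (up_weight (of_int a + w) (of_nat p) (of_int b - of_nat p + w - v) i j) (Q i (Suc j))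
          + smult (down_weight (of_int a + w) (v + of_nat q) (of_int b + of_nat q + w) i j) (Q (Suc i) j))"
      unfolding Q_def
      using shift_op_psi_lower_step[OF assms(1,2) pq, where i = i and j = j and v = v, folded w_def]
      by (cases "p < j") (simp_all add: path_weight_def falling_of_nat_eq_0)
  qed (simp_all add: shift_op_add shift_op_smult smult_add_right mult.commute
      path_weight_0_0 path_weight_0_Suc path_weight_Suc_0 path_weight_Suc_Suc)
  moreover have "Q (k - j) j = psi \<alpha> s t n 0 (a + int j - int (k - j)) (b - int k)" if "j \<le> k" for j
    using that by (simp add: Q_def)
  ultimately show ?thesis
    by (simp add: Q_def)
qed

lemma shift_op_psi_raise_step:
  fixes \<alpha> s t u :: complex
  assumes "\<alpha> \<noteq> 0" and "(s + t) / 2 \<notin> \<int>"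
    and pq: "int n + b - a = 2 * int p" "int n - b + a = 2 * int q" and "i \<le> q"
  defines "w \<equiv> (s + t) / 2"
  defines "x \<equiv> of_int a + w"
  shows "smult (inverse (-\<alpha>)) (shift_op \<alpha> (\<alpha> * (- of_int b - t - u)) (\<alpha> * (u - of_nat (i + j)))
        (psi \<alpha> s t n 0 (a + int j - int i) (b + int i + int j)))
    = smult (up_weight x (u + of_nat p) (of_int b - of_nat p + w) i j)
        (psi \<alpha> s t n 0 (a + int (Suc j) - int i) (b + int i + int (Suc j)))
    + smult (down_weight x (of_nat q) (of_int b + w + u + of_nat q) i j)
        (psi \<alpha> s t n 0 (a + int j - int (Suc i)) (b + int (Suc i) + int j))"
proof -
  define a' where "a' = a + int j - int i"
  define b' where "b' = b + int i + int j"
  have "int n + b' - a' = 2 * int (p + i)" and "int n - b' + a' = 2 * int (q - i)"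
    using pq \<open>i \<le> q\<close> by (simp_all add: a'_def b'_def)
  moreover have "\<alpha> * (- of_int b - t - u) + \<alpha> * (u - of_nat (i + j)) = \<alpha> * (- of_int b' - t)"
    by (simp add: b'_def algebra_simps)
  ultimately have step: "smult (inverse (-\<alpha>)) (shift_op \<alpha> (\<alpha> * (- of_int b - t - u)) (\<alpha> * (u - of_nat (i + j)))
      (psi \<alpha> s t n 0 a' b'))
    = smult ((u - of_nat (i + j) + of_nat (p + i)) * (of_int b' + (s + t) / 2 - of_nat (p + i))
        / (of_int a' + (s + t) / 2)) (psi \<alpha> s t n 0 (a' + 1) (b' + 1))
    + smult (of_nat (q - i) * (of_int b' + (s + t) / 2 + (u - of_nat (i + j)) + of_nat (q - i))
        / (of_int a' + (s + t) / 2)) (psi \<alpha> s t n 0 (a' - 1) (b' + 1))"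
    by (rule shift_op_psi_raise[OF assms(1,2)])
  have "of_int a' + (s + t) / 2 = x + of_nat j - of_nat i"
    by (simp add: a'_def x_def w_def)
  then have "(u - of_nat (i + j) + of_nat (p + i)) * (of_int b' + (s + t) / 2 - of_nat (p + i))
      / (of_int a' + (s + t) / 2) = up_weight x (u + of_nat p) (of_int b - of_nat p + w) i j"
    and "of_nat (q - i) * (of_int b' + (s + t) / 2 + (u - of_nat (i + j)) + of_nat (q - i))
      / (of_int a' + (s + t) / 2) = down_weight x (of_nat q) (of_int b + w + u + of_nat q) i j"
    unfolding up_weight_def down_weight_def using \<open>i \<le> q\<close> by (simp_all add: b'_def w_def algebra_simps)
  moreover have "psi \<alpha> s t n 0 (a + int (Suc j) - int i) (b + int i + int (Suc j)) = psi \<alpha> s t n 0 (a' + 1) (b' + 1)"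
    and "psi \<alpha> s t n 0 (a + int j - int (Suc i)) (b + int (Suc i) + int j) = psi \<alpha> s t n 0 (a' - 1) (b' + 1)"
    by (simp_all add: a'_def b'_def algebra_simps)
  ultimately show ?thesis
    unfolding a'_def[symmetric] b'_def[symmetric] step by simp
qed

lemma opprod_shift_op_psi_raise:
  fixes \<alpha> s t u :: complex
  assumes "\<alpha> \<noteq> 0" and "(s + t) / 2 \<notin> \<int>"
    and pq: "int n + b - a = 2 * int p" "int n - b + a = 2 * int q"
  defines "w \<equiv> (s + t) / 2"
  shows "opprod (\<lambda>l f. smult (inverse (-\<alpha>)) (shift_op \<alpha> (\<alpha> * (- of_int b - t - u)) (\<alpha> * (u - of_nat l)) f))
      k (psi \<alpha> s t n 0 a b)
    = (\<Sum>j\<le>k. smult (path_weight (of_int a + w) (u + of_nat p) (of_int b - of_nat p + w) (of_nat q)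
          (of_int b + w + u + of_nat q) (k - j) j) (psi \<alpha> s t n 0 (a + int j - int (k - j)) (b + int k)))"
proof -
  define Q where "Q = (\<lambda>i j. psi \<alpha> s t n 0 (a + int j - int i) (b + int i + int j))"
  have "of_int a + w \<notin> \<int>"
    using not_Ints_add_of_int[OF assms(2), of a] by (simp add: w_def add.commute)
  then have "opprod (\<lambda>l f. smult (inverse (-\<alpha>)) (shift_op \<alpha> (\<alpha> * (- of_int b - t - u)) (\<alpha> * (u - of_nat l)) f))
      k (Q 0 0)
    = (\<Sum>j\<le>k. smult (path_weight (of_int a + w) (u + of_nat p) (of_int b - of_nat p + w) (of_nat q)
          (of_int b + w + u + of_nat q) (k - j) j) (Q (k - j) j))"
  proof (intro opprod_lattice_sum)
    fix i j
    show "smult (path_weight (of_int a + w) (u + of_nat p) (of_int b - of_nat p + w) (of_nat q)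
          (of_int b + w + u + of_nat q) i j)
        (smult (inverse (-\<alpha>)) (shift_op \<alpha> (\<alpha> * (- of_int b - t - u)) (\<alpha> * (u - of_nat (i + j))) (Q i j)))
      = smult (path_weight (of_int a + w) (u + of_nat p) (of_int b - of_nat p + w) (of_nat q)
          (of_int b + w + u + of_nat q) i j)
        (smult (up_weight (of_int a + w) (u + of_nat p) (of_int b - of_nat p + w) i j) (Q i (Suc j))
          + smult (down_weight (of_int a + w) (of_nat q) (of_int b + w + u + of_nat q) i j) (Q (Suc i) j))"
      unfolding Q_def
      using shift_op_psi_raise_step[OF assms(1,2) pq, where i = i and j = j and u = u, folded w_def]
      by (cases "q < i") (simp_all add: path_weight_def falling_of_nat_eq_0)
  qed (simp_all add: shift_op_add shift_op_smult smult_add_right mult.commute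
      path_weight_0_0 path_weight_0_Suc path_weight_Suc_0 path_weight_Suc_Suc)
  moreover have "Q (k - j) j = psi \<alpha> s t n 0 (a + int j - int (k - j)) (b + int k)" if "j \<le> k" for j
    using that by (simp add: Q_def)
  ultimately show ?thesis
    by (simp add: Q_def)
qed

lemma Lop_eq_opprod_shift_op:
  fixes \<alpha> s t u :: complex
  assumes mpm: "int m + (c - b) = 2 * int mp" "int m - (c - b) = 2 * int mm"
  defines "A \<equiv> \<lambda>l. shift_op \<alpha> (\<alpha> * (- of_int (b - int mm) - t - u)) (\<alpha> * (u - of_nat l))"
    and "B \<equiv> \<lambda>l. shift_op \<alpha> (\<alpha> * (of_int b + s - (u - of_nat mp))) (\<alpha> * (u - of_nat mp - of_nat l))"
  shows "Lop \<alpha> s t m u b c f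
    = opprod (\<lambda>l g. smult (inverse (-\<alpha>)) (A l g)) mp (opprod (\<lambda>l g. smult (inverse (-\<alpha>)) (B l g)) mm f)"
proof -
  have "nat ((int m + (c - b)) div 2) = mp" and "nat ((int m - (c - b)) div 2) = mm"
    using mpm by simp_all
  moreover have "- u + of_int (int m - b - c) / 2 - t = - of_int (b - int mm) - t - u"
    and "- u + of_int (int m + b + c) / 2 + s = of_int b + s - (u - of_nat mp)"
    using arg_cong[OF mpm(1), of "of_int :: int \<Rightarrow> complex"] arg_cong[OF mpm(2), of "of_int :: int \<Rightarrow> complex"]
    by (simp_all add: field_simps)
  ultimately have "Lop \<alpha> s t m u b c f = smult (inverse ((-\<alpha>) ^ m)) (opprod A mp (opprod B mm f))"
    unfolding Lop_def Let_def A_def B_def shift_op_def by (simp only:)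
  moreover have "m = mp + mm"
    using mpm by linarith
  then have "inverse ((-\<alpha>) ^ m) = inverse (-\<alpha>) ^ mp * inverse (-\<alpha>) ^ mm"
    by (simp only: power_add power_inverse inverse_mult_distrib)
  moreover have A: "A l (smult c g) = smult c (A l g)" and B: "B l (smult c g) = smult c (B l g)" for l c g
    by (simp_all add: A_def B_def shift_op_smult)
  then have "opprod (\<lambda>l g. smult (inverse (-\<alpha>)) (A l g)) mp (opprod (\<lambda>l g. smult (inverse (-\<alpha>)) (B l g)) mm f)
      = smult (inverse (-\<alpha>) ^ mp * inverse (-\<alpha>) ^ mm) (opprod A mp (opprod B mm f))"
    by (simp only: opprod_scaled opprod_smult smult_smult)
  ultimately show ?thesis
    by simp
qed

lemma Lop_psi_eq_double_sum:
  fixes \<alpha> s t u :: complex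
  assumes "\<alpha> \<noteq> 0" and "(s + t) / 2 \<notin> \<int>"
    and pq: "int n + b - a = 2 * int p" "int n - b + a = 2 * int q"
    and mpm: "int m + (c - b) = 2 * int mp" "int m - (c - b) = 2 * int mm"
  defines "w \<equiv> (s + t) / 2"
    and "a' \<equiv> \<lambda>j. a + int j - int (mm - j)"
  defines "outer \<equiv> \<lambda>j. path_weight (of_int a + w) (of_nat p) (of_int b - of_nat p + w - (u - of_nat mp))
      (u - of_nat mp + of_nat q) (of_int b + of_nat q + w) (mm - j) j"
    and "inner \<equiv> \<lambda>j j'. path_weight (of_int a + w + of_nat j - of_nat (mm - j)) (u + of_nat p - of_nat j)
      (of_int b - of_nat mm - of_nat p + of_nat j + w) (of_nat q + of_nat j)
      (of_int b - of_nat mm + w + u + of_nat q + of_nat j) (mp - j') j'"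
  shows "Lop \<alpha> s t m u b c (psi \<alpha> s t n 0 a b)
    = (\<Sum>j\<le>mm. \<Sum>j'\<le>mp. smult (outer j * inner j j') (psi \<alpha> s t n 0 (a' j + int j' - int (mp - j')) c))"
proof -
  define A where "A = (\<lambda>l g. smult (inverse (-\<alpha>)) (shift_op \<alpha> (\<alpha> * (- of_int (b - int mm) - t - u)) (\<alpha> * (u - of_nat l)) g))"
  have A_add: "A l (f + g) = A l f + A l g" and A_smult: "A l (smult c f) = smult c (A l f)" for l f g c
    by (simp_all add: A_def shift_op_add shift_op_smult smult_add_right mult.commute)
  have "Lop \<alpha> s t m u b c (psi \<alpha> s t n 0 a b)
      = opprod A mp (\<Sum>j\<le>mm. smult (outer j) (psi \<alpha> s t n 0 (a' j) (b - int mm)))"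
    unfolding Lop_eq_opprod_shift_op[OF mpm] opprod_shift_op_psi_lower[OF assms(1,2) pq]
    by (simp add: A_def outer_def a'_def w_def)
  also have "\<dots> = (\<Sum>j\<le>mm. smult (outer j) (opprod A mp (psi \<alpha> s t n 0 (a' j) (b - int mm))))"
    by (simp only: additive_sum[of "opprod A mp", OF opprod_add[of A, OF A_add]] opprod_smult[of A, OF A_smult])
  also have "\<dots> = (\<Sum>j\<le>mm. \<Sum>j'\<le>mp. smult (outer j * inner j j') (psi \<alpha> s t n 0 (a' j + int j' - int (mp - j')) c))"
  proof (intro sum.cong refl)
    fix j assume "j \<in> {..mm}"
    show "smult (outer j) (opprod A mp (psi \<alpha> s t n 0 (a' j) (b - int mm)))
      = (\<Sum>j'\<le>mp. smult (outer j * inner j j') (psi \<alpha> s t n 0 (a' j + int j' - int (mp - j')) c))"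
    proof (cases "p < j")
      case True
      then show ?thesis
        by (simp add: outer_def path_weight_def falling_of_nat_eq_0)
    next
      case False
      have "int n + (b - int mm) - a' j = 2 * int (p - j)" and "int n - (b - int mm) + a' j = 2 * int (q + j)"
        using pq False \<open>j \<in> {..mm}\<close> by (simp_all add: a'_def)
      note raise = opprod_shift_op_psi_raise[OF assms(1,2) this, of u mp]
      have "b - int mm + int mp = c"
        using mpm by linarith
      then have "opprod A mp (psi \<alpha> s t n 0 (a' j) (b - int mm))
          = (\<Sum>j'\<le>mp. smult (inner j j') (psi \<alpha> s t n 0 (a' j + int j' - int (mp - j')) c))"
        unfolding A_def raise using False by (simp add: inner_def w_def a'_def algebra_simps)
      then show ?thesis
        by (simp add: smult_sum_right)
    qed
  qed
  finally show ?thesis .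
qed

definition W_term :: "complex \<Rightarrow> complex \<Rightarrow> nat \<Rightarrow> nat \<Rightarrow> int \<Rightarrow> int \<Rightarrow> int \<Rightarrow> int \<Rightarrow> complex \<Rightarrow> int \<Rightarrow> complex"
  where "W_term s t n m a b b' c u \<Sigma> =
    (let w = (s + t) / 2;
         \<nu> = a - b; \<mu> = b - c; \<mu>' = b' - a;
         mp = nat ((int m - \<mu>) div 2);
         mm = nat ((int m + \<mu>) div 2);
         x = of_int a + w;
         kp = nat ((int mm + \<Sigma>) div 2);
         km = nat ((int mm - \<Sigma>) div 2);
         rp = nat ((int mp + (\<mu>' - \<Sigma>)) div 2);
         rm = nat ((int mp - (\<mu>' - \<Sigma>)) div 2);
         \<theta>1 = of_int (int n - \<nu>) / 2;
         \<theta>2 = - u + of_int c + of_nat mm - of_int (int n - \<nu>) / 2 + w;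
         \<theta>3 = u - of_nat mp + of_int (int n + \<nu>) / 2;
         \<theta>4 = of_int c + of_int \<mu> + of_int (int n + \<nu>) / 2 + w;
         \<theta>5 = u + of_int (int n - \<nu> - \<Sigma> - int mm) / 2;
         \<theta>6 = of_int c + of_int \<mu> - of_int (int n - \<nu> - \<Sigma> + int mm) / 2 + w;
         \<theta>7 = of_int (int n + \<nu> + \<Sigma> + int mm) / 2;
         \<theta>8 = u + of_int c + of_int \<mu> + of_int (int n + \<nu> + \<Sigma> - int mm) / 2 + w
     in ((x + of_int \<mu>') * of_nat (mm choose kp) * of_nat (mp choose rp)
          * falling \<theta>1 kp * rising \<theta>2 kp * falling \<theta>3 km * falling \<theta>4 km
          * falling \<theta>5 rp * rising \<theta>6 rp * falling \<theta>7 rm * falling \<theta>8 rm)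
        / (x * rising (x + 1) kp * falling (x - 1) km
           * rising (x + of_int \<Sigma> + 1) rp * falling (x + of_int \<Sigma> - 1) rm))"

lemma Wcoef_eq_sum_W_term:
  "Wcoef s t n m a b b' c u =
    (\<Sum>\<Sigma>\<in>{\<Sigma>::int. - int (nat ((int m + (b - c)) div 2)) \<le> \<Sigma> \<and> \<Sigma> \<le> int (nat ((int m + (b - c)) div 2))
        \<and> (\<Sigma> + int (nat ((int m + (b - c)) div 2))) mod 2 = 0
        \<and> \<bar>(b' - a) - \<Sigma>\<bar> \<le> int (nat ((int m - (b - c)) div 2))}. W_term s t n m a b b' c u \<Sigma>)"
  unfolding Wcoef_def W_term_def Let_def ..

text \<open>The values of the let-bound quantities of \<open>W_term\<close> are hypotheses, so that they are all
  replaced in a single rewriting step, before any normalisation of the nested terms.\<close>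
lemma W_term_eval:
  assumes "nat ((int m + (b - c)) div 2) = MM" and "nat ((int m - (b - c)) div 2) = MP"
    and "nat ((int MM + \<Sigma>) div 2) = KP" and "nat ((int MM - \<Sigma>) div 2) = KM"
    and "nat ((int MP + ((b' - a) - \<Sigma>)) div 2) = RP" and "nat ((int MP - ((b' - a) - \<Sigma>)) div 2) = RM"
    and "of_int (int n - (a - b)) / 2 = T1"
    and "- u + of_int c + of_nat MM - T1 + (s + t) / 2 = T2"
    and "u - of_nat MP + of_int (int n + (a - b)) / 2 = T3"
    and "of_int c + of_int (b - c) + of_int (int n + (a - b)) / 2 + (s + t) / 2 = T4"
    and "u + of_int (int n - (a - b) - \<Sigma> - int MM) / 2 = T5"
    and "of_int c + of_int (b - c) - of_int (int n - (a - b) - \<Sigma> + int MM) / 2 + (s + t) / 2 = T6"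
    and "of_int (int n + (a - b) + \<Sigma> + int MM) / 2 = T7"
    and "u + of_int c + of_int (b - c) + of_int (int n + (a - b) + \<Sigma> - int MM) / 2 + (s + t) / 2 = T8"
    and "of_int a + (s + t) / 2 = X" and "X + of_int (b' - a) = NUM" and "X + of_int \<Sigma> = Y"
  shows "W_term s t n m a b b' c u \<Sigma>
    = (NUM * of_nat (MM choose KP) * of_nat (MP choose RP)
        * falling T1 KP * rising T2 KP * falling T3 KM * falling T4 KM
        * falling T5 RP * rising T6 RP * falling T7 RM * falling T8 RM)
      / (X * rising (X + 1) KP * falling (X - 1) KM * rising (Y + 1) RP * falling (Y - 1) RM)"
  unfolding W_term_def Let_def assms[symmetric] ..

text \<open>The prefactor \<open>(y + j' - i') / y\<close> of the second weight cancels against the denominators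
  of the first one, since \<open>y = x + j - i\<close>.\<close>
lemma path_weight_mult:
  assumes "x \<notin> \<int>" and y: "y = x + of_nat j - of_nat i"
  shows "path_weight x P1 P2 P3 P4 i j * path_weight y R1 R2 R3 R4 i' j'
    = ((y + of_nat j' - of_nat i') * of_nat ((i + j) choose j) * of_nat ((i' + j') choose j')
        * falling P1 j * rising P2 j * falling P3 i * falling P4 i
        * falling R1 j' * rising R2 j' * falling R3 i' * falling R4 i')
      / (x * rising (x + 1) j * falling (x - 1) i * rising (y + 1) j' * falling (y - 1) i')"
proof -
  have "y \<notin> \<int>"
    using not_Ints_add_of_int[OF assms(1), of "int j - int i"] by (simp add: y algebra_simps)
  have "x \<noteq> 0" "y \<noteq> 0"
    using not_Ints_add_of_int_neq_0[OF assms(1), of 0] not_Ints_add_of_int_neq_0[OF \<open>y \<notin> \<int>\<close>, of 0]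
    by simp_all
  moreover have "rising (x + 1) j \<noteq> 0" "falling (x - 1) i \<noteq> 0" "rising (y + 1) j' \<noteq> 0" "falling (y - 1) i' \<noteq> 0"
    using not_Ints_add_of_int[OF assms(1), of 1] not_Ints_add_of_int[OF assms(1), of "- 1"]
      not_Ints_add_of_int[OF \<open>y \<notin> \<int>\<close>, of 1] not_Ints_add_of_int[OF \<open>y \<notin> \<int>\<close>, of "- 1"]
    by (simp_all add: rising_not_Ints_neq_0 falling_not_Ints_neq_0)
  ultimately show ?thesis
    unfolding path_weight_def y[symmetric] by (simp add: field_simps)
qed

lemma W_term_eq_path_weight_mult:
  fixes s t u :: complex
  assumes "(s + t) / 2 \<notin> \<int>"
    and pq: "int n + b - a = 2 * int p" "int n - b + a = 2 * int q"
    and mpm: "int m + (c - b) = 2 * int mp" "int m - (c - b) = 2 * int mm"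
    and "j \<le> mm" and "j' \<le> mp"
  defines "w \<equiv> (s + t) / 2"
  defines "x \<equiv> of_int a + w"
  shows "W_term s t n m a b (a + int j - int (mm - j) + int j' - int (mp - j')) c u (int j - int (mm - j))
    = path_weight x (of_nat p) (of_int b - of_nat p + w - (u - of_nat mp)) (u - of_nat mp + of_nat q)
        (of_int b + of_nat q + w) (mm - j) j
      * path_weight (x + of_nat j - of_nat (mm - j)) (u + of_nat p - of_nat j)
        (of_int b - of_nat mm - of_nat p + of_nat j + w) (of_nat q + of_nat j)
        (of_int b - of_nat mm + w + u + of_nat q + of_nat j) (mp - j') j'"
proof -
  define y where "y = x + of_nat j - of_nat (mm - j)"
  have "x \<notin> \<int>"
    using not_Ints_add_of_int[OF assms(1), of a] by (simp add: x_def w_def add.commute)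
  have "of_nat p = (of_nat n + of_int b - of_int a) / (2 :: complex)"
    and "of_nat q = (of_nat n - of_int b + of_int a) / (2 :: complex)"
    and "of_nat mp = (of_nat m + of_int c - of_int b) / (2 :: complex)"
    and "of_nat mm = (of_nat m - of_int c + of_int b) / (2 :: complex)"
    using arg_cong[OF pq(1), of "of_int :: int \<Rightarrow> complex"] arg_cong[OF pq(2), of "of_int :: int \<Rightarrow> complex"]
      arg_cong[OF mpm(1), of "of_int :: int \<Rightarrow> complex"] arg_cong[OF mpm(2), of "of_int :: int \<Rightarrow> complex"]
    by (simp_all add: field_simps)
  note counts = this
  have "W_term s t n m a b (a + int j - int (mm - j) + int j' - int (mp - j')) c u (int j - int (mm - j))
    = ((y + of_nat j' - of_nat (mp - j')) * of_nat (mm choose j) * of_nat (mp choose j')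
        * falling (of_nat p) j * rising (of_int b - of_nat p + w - (u - of_nat mp)) j
        * falling (u - of_nat mp + of_nat q) (mm - j) * falling (of_int b + of_nat q + w) (mm - j)
        * falling (u + of_nat p - of_nat j) j' * rising (of_int b - of_nat mm - of_nat p + of_nat j + w) j'
        * falling (of_nat q + of_nat j) (mp - j') * falling (of_int b - of_nat mm + w + u + of_nat q + of_nat j) (mp - j'))
      / (x * rising (x + 1) j * falling (x - 1) (mm - j) * rising (y + 1) j' * falling (y - 1) (mp - j'))"
  proof (rule W_term_eval)
    show "nat ((int m + (b - c)) div 2) = mm" and "nat ((int m - (b - c)) div 2) = mp"
      using mpm by (simp_all add: algebra_simps)
    show "nat ((int mm + (int j - int (mm - j))) div 2) = j" and "nat ((int mm - (int j - int (mm - j))) div 2) = mm - j"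
      and "nat ((int mp + (a + int j - int (mm - j) + int j' - int (mp - j') - a - (int j - int (mm - j)))) div 2) = j'"
      and "nat ((int mp - (a + int j - int (mm - j) + int j' - int (mp - j') - a - (int j - int (mm - j)))) div 2) = mp - j'"
      using \<open>j \<le> mm\<close> \<open>j' \<le> mp\<close> by simp_all
  qed (use \<open>j \<le> mm\<close> \<open>j' \<le> mp\<close> in \<open>simp_all add: counts x_def y_def w_def field_simps\<close>)
  also have "\<dots> = path_weight x (of_nat p) (of_int b - of_nat p + w - (u - of_nat mp)) (u - of_nat mp + of_nat q)
        (of_int b + of_nat q + w) (mm - j) j
      * path_weight y (u + of_nat p - of_nat j) (of_int b - of_nat mm - of_nat p + of_nat j + w) (of_nat q + of_nat j)
        (of_int b - of_nat mm + w + u + of_nat q + of_nat j) (mp - j') j'"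
    using path_weight_mult[OF \<open>x \<notin> \<int>\<close> y_def] \<open>j \<le> mm\<close> \<open>j' \<le> mp\<close> by simp
  finally show ?thesis
    unfolding y_def .
qed

lemma finite_parity_interval: "finite {b'::int. \<bar>b' - a\<bar> \<le> int m \<and> P b'}"
  by (rule finite_subset[of _ "{a - int m .. a + int m}"]) (auto simp: abs_le_iff)

lemma parity_interval_witnesses:
  assumes "\<bar>d\<bar> \<le> int n" and "(d + int n) mod 2 = 0"
  obtains p q where "int n - d = 2 * int p" and "int n + d = 2 * int q"
proof
  show "int n - d = 2 * int (nat ((int n - d) div 2))" and "int n + d = 2 * int (nat ((int n + d) div 2))"
    using assms by (simp_all add: abs_le_iff) presburger+
qed

lemma parity_lattice_coordinates:
  assumes "\<bar>b' - a\<bar> \<le> int (mp + mm)" and "(b' - a + int (mp + mm)) mod 2 = 0"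
    and "- int mm \<le> \<Sigma>" and "\<Sigma> \<le> int mm" and "(\<Sigma> + int mm) mod 2 = 0" and "\<bar>(b' - a) - \<Sigma>\<bar> \<le> int mp"
  obtains j j' where "j \<le> mm" and "j' \<le> mp"
    and "b' = a + int j - int (mm - j) + int j' - int (mp - j')" and "\<Sigma> = int j - int (mm - j)"
proof
  define j where "j = nat ((int mm + \<Sigma>) div 2)"
  define j' where "j' = nat ((int mp + (b' - a - \<Sigma>)) div 2)"
  have "int j = (int mm + \<Sigma>) div 2"
    unfolding j_def using assms(3) by simp
  then have j: "2 * int j = int mm + \<Sigma>"
    using assms(5) by presburger
  have "int j' = (int mp + (b' - a - \<Sigma>)) div 2"
    unfolding j'_def using assms(6) by (simp add: abs_le_iff)
  then have j': "2 * int j' = int mp + (b' - a - \<Sigma>)"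
    using assms(2,5) by presburger
  show "j \<le> mm" and "j' \<le> mp"
    using j j' assms(4,6) by (simp_all add: abs_le_iff)
  then have "int (mm - j) = int mm - int j" and "int (mp - j') = int mp - int j'"
    by simp_all
  with j j' show "b' = a + int j - int (mm - j) + int j' - int (mp - j')" and "\<Sigma> = int j - int (mm - j)"
    by simp_all
qed

lemma sum_parity_lattice_reindex:
  fixes G :: "int \<Rightarrow> int \<Rightarrow> 'b::comm_monoid_add"
  shows "(\<Sum>b'\<in>{b'. \<bar>b' - a\<bar> \<le> int (mp + mm) \<and> (b' - a + int (mp + mm)) mod 2 = 0}.
            \<Sum>\<Sigma>\<in>{\<Sigma>. - int mm \<le> \<Sigma> \<and> \<Sigma> \<le> int mm \<and> (\<Sigma> + int mm) mod 2 = 0 \<and> \<bar>(b' - a) - \<Sigma>\<bar> \<le> int mp}.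
              G b' \<Sigma>)
    = (\<Sum>j\<le>mm. \<Sum>j'\<le>mp. G (a + int j - int (mm - j) + int j' - int (mp - j')) (int j - int (mm - j)))"
    (is "(\<Sum>b'\<in>?M. \<Sum>\<Sigma>\<in>?S b'. _) = _")
proof -
  define point where
    "point = (\<lambda>(j, j'). (a + int j - int (mm - j) + int j' - int (mp - j'), int j - int (mm - j)))"
  have "Sigma ?M ?S = point ` ({..mm} \<times> {..mp})"
  proof (rule subset_antisym)
    show "Sigma ?M ?S \<subseteq> point ` ({..mm} \<times> {..mp})"
    proof
      fix z assume "z \<in> Sigma ?M ?S"
      then obtain b' \<Sigma> where z: "z = (b', \<Sigma>)" and "b' \<in> ?M" and "\<Sigma> \<in> ?S b'"
        by (rule SigmaE)
      obtain j j' where "j \<le> mm" and "j' \<le> mp"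
        and "b' = a + int j - int (mm - j) + int j' - int (mp - j')" and "\<Sigma> = int j - int (mm - j)"
        by (rule parity_lattice_coordinates[of b' a mp mm \<Sigma>]) (use \<open>b' \<in> ?M\<close> \<open>\<Sigma> \<in> ?S b'\<close> in simp_all)
      then show "z \<in> point ` ({..mm} \<times> {..mp})"
        by (intro rev_image_eqI[of "(j, j')"]) (simp_all add: z point_def)
    qed
    show "point ` ({..mm} \<times> {..mp}) \<subseteq> Sigma ?M ?S"
      by (auto simp: point_def abs_le_iff; presburger)
  qed
  moreover have "inj_on point ({..mm} \<times> {..mp})"
    by (auto simp: point_def inj_on_def)
  moreover have "finite ?M"
    by (rule finite_parity_interval)
  moreover have "finite (?S b')" for b'
    by (rule finite_subset[of _ "{- int mm .. int mm}"]) auto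
  ultimately have "(\<Sum>b'\<in>?M. \<Sum>\<Sigma>\<in>?S b'. G b' \<Sigma>) = (\<Sum>z\<in>{..mm} \<times> {..mp}. case_prod G (point z))"
    by (simp add: sum.Sigma sum.reindex)
  then show ?thesis
    unfolding sum.cartesian_product by (simp add: point_def split_def)
qed

lemma Lop_psi_expansion:
  fixes \<alpha> s t u :: complex
  assumes "\<alpha> \<noteq> 0" and "(s + t) / 2 \<notin> \<int>"
    and pq: "int n + b - a = 2 * int p" "int n - b + a = 2 * int q"
    and mpm: "int m + (c - b) = 2 * int mp" "int m - (c - b) = 2 * int mm"
  shows "Lop \<alpha> s t m u b c (psi \<alpha> s t n 0 a b)
    = (\<Sum>b'\<in>{b'. \<bar>b' - a\<bar> \<le> int m \<and> (b' - a + int m) mod 2 = 0}.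
        smult (Wcoef s t n m a b b' c u) (psi \<alpha> s t n 0 b' c))"
proof -
  have m: "m = mp + mm"
    using mpm by linarith
  have "nat ((int m + (b - c)) div 2) = mm" and "nat ((int m - (b - c)) div 2) = mp"
    using mpm by (simp_all add: algebra_simps)
  then have "(\<Sum>b'\<in>{b'. \<bar>b' - a\<bar> \<le> int m \<and> (b' - a + int m) mod 2 = 0}.
        smult (Wcoef s t n m a b b' c u) (psi \<alpha> s t n 0 b' c))
    = (\<Sum>b'\<in>{b'. \<bar>b' - a\<bar> \<le> int (mp + mm) \<and> (b' - a + int (mp + mm)) mod 2 = 0}.
        \<Sum>\<Sigma>\<in>{\<Sigma>. - int mm \<le> \<Sigma> \<and> \<Sigma> \<le> int mm \<and> (\<Sigma> + int mm) mod 2 = 0 \<and> \<bar>(b' - a) - \<Sigma>\<bar> \<le> int mp}.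
          smult (W_term s t n m a b b' c u \<Sigma>) (psi \<alpha> s t n 0 b' c))"
    unfolding Wcoef_eq_sum_W_term smult_sum m by simp
  also have "\<dots> = (\<Sum>j\<le>mm. \<Sum>j'\<le>mp.
      smult (W_term s t n m a b (a + int j - int (mm - j) + int j' - int (mp - j')) c u (int j - int (mm - j)))
        (psi \<alpha> s t n 0 (a + int j - int (mm - j) + int j' - int (mp - j')) c))"
    by (rule sum_parity_lattice_reindex)
  also have "\<dots> = Lop \<alpha> s t m u b c (psi \<alpha> s t n 0 a b)"
    unfolding Lop_psi_eq_double_sum[OF assms]
    by (intro sum.cong refl) (simp only: atMost_iff W_term_eq_path_weight_mult[OF assms(2) pq mpm])
  finally show ?thesis ..
qed

lemma triangular_sum_eq_0_imp_eq_0: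
  fixes G :: "nat \<Rightarrow> 'a::idom"
  assumes sum: "\<And>k. k \<le> n \<Longrightarrow> (\<Sum>j\<le>n. G j * V j k) = 0"
    and upper: "\<And>j k. j < k \<Longrightarrow> k \<le> n \<Longrightarrow> V j k = 0"
    and diagonal: "\<And>k. k \<le> n \<Longrightarrow> V k k \<noteq> 0"
  shows "k \<le> n \<Longrightarrow> G k = 0"
proof (induction "n - k" arbitrary: k rule: less_induct)
  case less
  have "(\<Sum>j\<le>n. G j * V j k) = G k * V k k + (\<Sum>j\<in>{..n} - {k}. G j * V j k)"
    by (rule sum.remove) (use less.prems in auto)
  also have "(\<Sum>j\<in>{..n} - {k}. G j * V j k) = 0"
  proof (rule sum.neutral, intro ballI)
    fix j assume "j \<in> {..n} - {k}"
    then have "j < k \<or> k < j \<and> j \<le> n"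
      by auto
    then show "G j * V j k = 0"
      using upper less.hyps[of j] less.prems by auto
  qed
  finally show "G k = 0"
    using sum[OF less.prems] diagonal[OF less.prems] by simp
qed

lemma psi_eval_upper:
  assumes "j < k" and "k \<le> n"
  shows "poly (psi \<alpha> s t n 0 (c - int n + 2 * int j) c) (\<alpha> * (1 - of_int c - t + 2 * of_nat (n - k))) = 0"
proof -
  have "psi \<alpha> s t n 0 (c - int n + 2 * int j) c
      = smult ((-1) ^ n) (prog_poly \<alpha> (1 - of_int c - t) (n - j) * prog_poly \<alpha> (of_int c + 1 + s) j)"
    by (rule psi_eq_prog_poly) (use assms in simp_all)
  moreover have "n - k < n - j"
    using assms by simp
  ultimately show ?thesis
    by (auto simp: poly_prog_poly intro!: prod_zero bexI[of _ "n - k"])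
qed

lemma psi_eval_diagonal:
  assumes "\<alpha> \<noteq> 0" and "(s + t) / 2 \<notin> \<int>" and "k \<le> n"
  shows "poly (psi \<alpha> s t n 0 (c - int n + 2 * int k) c) (\<alpha> * (1 - of_int c - t + 2 * of_nat (n - k))) \<noteq> 0"
proof -
  define z where "z = \<alpha> * (1 - of_int c - t + 2 * of_nat (n - k))"
  have "psi \<alpha> s t n 0 (c - int n + 2 * int k) c
      = smult ((-1) ^ n) (prog_poly \<alpha> (1 - of_int c - t) (n - k) * prog_poly \<alpha> (of_int c + 1 + s) k)"
    by (rule psi_eq_prog_poly) (use assms in simp_all)
  moreover have "z - \<alpha> * (1 - of_int c - t + 2 * of_nat i) \<noteq> 0" if "i < n - k" for i
  proof -
    have "z - \<alpha> * (1 - of_int c - t + 2 * of_nat i) = 2 * \<alpha> * (of_nat (n - k) - of_nat i)"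
      by (simp add: z_def algebra_simps)
    moreover have "(of_nat (n - k) :: complex) \<noteq> of_nat i"
      using that by (metis less_irrefl of_nat_eq_iff)
    ultimately show ?thesis
      using assms(1) by simp
  qed
  moreover have "z - \<alpha> * (of_int c + 1 + s + 2 * of_nat i) \<noteq> 0" for i
  proof -
    have "z - \<alpha> * (of_int c + 1 + s + 2 * of_nat i) = - 2 * \<alpha> * ((s + t) / 2 + of_int (int i - int (n - k) + c))"
      by (simp add: z_def field_simps)
    then show ?thesis
      using assms(1) not_Ints_add_of_int_neq_0[OF assms(2), of "int i - int (n - k) + c"] by (simp del: of_int_add of_int_diff)
  qed
  ultimately show ?thesis
    by (simp add: z_def[symmetric] poly_prog_poly)
qed

lemma psi_linear_independent:
  fixes g :: "int \<Rightarrow> complex"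
  assumes "\<alpha> \<noteq> 0" and "(s + t) / 2 \<notin> \<int>"
    and sum: "(\<Sum>b'\<in>{b'. \<bar>b' - c\<bar> \<le> int n \<and> (b' - c + int n) mod 2 = 0}. smult (g b') (psi \<alpha> s t n 0 b' c)) = 0"
    and b': "b' \<in> {b'. \<bar>b' - c\<bar> \<le> int n \<and> (b' - c + int n) mod 2 = 0}"
  shows "g b' = 0"
proof -
  define idx where "idx = (\<lambda>j::nat. c - int n + 2 * int j)"
  have range: "{b'. \<bar>b' - c\<bar> \<le> int n \<and> (b' - c + int n) mod 2 = 0} = idx ` {..n}"
  proof (intro equalityI subsetI)
    fix y assume "y \<in> {b'. \<bar>b' - c\<bar> \<le> int n \<and> (b' - c + int n) mod 2 = 0}"
    then have y: "\<bar>y - c\<bar> \<le> int n" "(y - c + int n) mod 2 = 0"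
      by auto
    define j where "j = nat ((y - c + int n) div 2)"
    have "2 * int j = y - c + int n"
      unfolding j_def using y by (simp add: abs_le_iff) presburger
    then have "y = idx j" and "j \<le> n"
      using y by (auto simp: idx_def abs_le_iff)
    then show "y \<in> idx ` {..n}"
      by blast
  qed (auto simp: idx_def abs_le_iff)
  have "inj_on idx {..n}"
    by (rule inj_onI) (simp add: idx_def)
  with sum have "(\<Sum>j\<le>n. smult (g (idx j)) (psi \<alpha> s t n 0 (idx j) c)) = 0"
    unfolding range by (simp add: sum.reindex)
  then have "poly (\<Sum>j\<le>n. smult (g (idx j)) (psi \<alpha> s t n 0 (idx j) c)) z = 0" for z
    by simp
  then have "(\<Sum>j\<le>n. g (idx j) * poly (psi \<alpha> s t n 0 (idx j) c) (\<alpha> * (1 - of_int c - t + 2 * of_nat (n - k)))) = 0"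
    for k
    by (simp add: poly_sum)
  then have "g (idx k) = 0" if "k \<le> n" for k
  proof (rule triangular_sum_eq_0_imp_eq_0[where G = "\<lambda>j. g (idx j)", OF _ _ _ that])
    show "poly (psi \<alpha> s t n 0 (idx j) c) (\<alpha> * (1 - of_int c - t + 2 * of_nat (n - k))) = 0"
      if "j < k" and "k \<le> n" for j k
      using psi_eval_upper[OF that] by (simp add: idx_def)
    show "poly (psi \<alpha> s t n 0 (idx k) c) (\<alpha> * (1 - of_int c - t + 2 * of_nat (n - k))) \<noteq> 0"
      if "k \<le> n" for k
      using psi_eval_diagonal[OF assms(1,2) that] by (simp add: idx_def)
  qed
  with b' show ?thesis
    unfolding range by auto
qed

lemma sum_smult_coefficients_unique:
  fixes P :: "int \<Rightarrow> 'a::comm_ring poly"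
  assumes "finite M" and "finite N"
    and indep: "\<And>h. (\<Sum>b\<in>N. smult (h b) (P b)) = 0 \<Longrightarrow> \<forall>b\<in>N. h b = 0"
    and vanish: "\<And>b. b \<in> M - N \<Longrightarrow> P b = 0"
    and eq: "(\<Sum>b\<in>M. smult (W b) (P b)) = (\<Sum>b\<in>N. smult (g b) (P b))"
  shows "\<forall>b\<in>N. g b = (if b \<in> M then W b else 0)"
proof -
  define W' where "W' b = (if b \<in> M then W b else 0)" for b
  have "(\<Sum>b\<in>M. smult (W b) (P b)) = (\<Sum>b\<in>M \<union> N. smult (W' b) (P b))"
    by (rule sum.mono_neutral_cong_left) (use assms in \<open>auto simp: W'_def\<close>)
  also have "\<dots> = (\<Sum>b\<in>N. smult (W' b) (P b))"
    by (rule sum.mono_neutral_right) (use assms in auto)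
  finally have "(\<Sum>b\<in>N. smult (g b - W' b) (P b)) = 0"
    using eq by (simp add: smult_diff_left sum_subtractf)
  from indep[OF this] show ?thesis
    by (simp add: W'_def)
qed

theorem mainTheorem12:
  fixes \<alpha> s t u :: complex and n m :: nat and a b c :: int
  assumes "\<alpha> \<noteq> 0"
    and "(s + t) / 2 \<notin> \<int>"
    and "0 < n" and "0 < m"
    and "\<bar>a - b\<bar> \<le> int n" and "(a - b + int n) mod 2 = 0"
    and "\<bar>b - c\<bar> \<le> int m" and "(b - c + int m) mod 2 = 0"
  shows "Lop \<alpha> s t m u b c (psi \<alpha> s t n 0 a b) =
           (\<Sum>b'\<in>{b'. \<bar>b' - a\<bar> \<le> int m \<and> (b' - a + int m) mod 2 = 0}.
              smult (Wcoef s t n m a b b' c u) (psi \<alpha> s t n 0 b' c))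
    \<and> (\<forall>g :: int \<Rightarrow> complex.
          (\<Sum>b'\<in>{b'. \<bar>b' - c\<bar> \<le> int n \<and> (b' - c + int n) mod 2 = 0}.
              smult (g b') (psi \<alpha> s t n 0 b' c)) = 0
          \<longrightarrow> (\<forall>b'\<in>{b'. \<bar>b' - c\<bar> \<le> int n \<and> (b' - c + int n) mod 2 = 0}. g b' = 0))
    \<and> (\<forall>g :: int \<Rightarrow> complex.
          Lop \<alpha> s t m u b c (psi \<alpha> s t n 0 a b) =
            (\<Sum>b'\<in>{b'. \<bar>b' - c\<bar> \<le> int n \<and> (b' - c + int n) mod 2 = 0}.
               smult (g b') (psi \<alpha> s t n 0 b' c))
          \<longrightarrow> (\<forall>b'\<in>{b'. \<bar>b' - c\<bar> \<le> int n \<and> (b' - c + int n) mod 2 = 0}.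
                 g b' = (if \<bar>b' - a\<bar> \<le> int m \<and> (b' - a + int m) mod 2 = 0
                         then Wcoef s t n m a b b' c u else 0)))"
proof -
  define M where "M = {b'. \<bar>b' - a\<bar> \<le> int m \<and> (b' - a + int m) mod 2 = 0}"
  define N where "N = {b'. \<bar>b' - c\<bar> \<le> int n \<and> (b' - c + int n) mod 2 = 0}"
  obtain p q where "int n - (a - b) = 2 * int p" and "int n + (a - b) = 2 * int q"
    by (rule parity_interval_witnesses[OF assms(5,6)])
  moreover obtain mp mm where "int m - (b - c) = 2 * int mp" and "int m + (b - c) = 2 * int mm"
    by (rule parity_interval_witnesses[OF assms(7,8)])
  ultimately have expansion: "Lop \<alpha> s t m u b c (psi \<alpha> s t n 0 a b)
      = (\<Sum>b'\<in>M. smult (Wcoef s t n m a b b' c u) (psi \<alpha> s t n 0 b' c))"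
    unfolding M_def by (intro Lop_psi_expansion[OF assms(1,2), where p = p and q = q and mp = mp and mm = mm]) simp_all
  have independent: "\<forall>g. (\<Sum>b'\<in>N. smult (g b') (psi \<alpha> s t n 0 b' c)) = 0 \<longrightarrow> (\<forall>b'\<in>N. g b' = 0)"
    unfolding N_def by (intro allI impI ballI psi_linear_independent[OF assms(1,2)])
  have vanish: "psi \<alpha> s t n 0 b' c = 0" if "b' \<notin> N" for b'
    using that unfolding N_def by (intro psi_eq_0) simp
  have unique: "\<forall>g. Lop \<alpha> s t m u b c (psi \<alpha> s t n 0 a b) = (\<Sum>b'\<in>N. smult (g b') (psi \<alpha> s t n 0 b' c))
      \<longrightarrow> (\<forall>b'\<in>N. g b' = (if b' \<in> M then Wcoef s t n m a b b' c u else 0))"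
  proof (intro allI impI)
    fix g assume "Lop \<alpha> s t m u b c (psi \<alpha> s t n 0 a b) = (\<Sum>b'\<in>N. smult (g b') (psi \<alpha> s t n 0 b' c))"
    from sum_smult_coefficients_unique[OF _ _ _ _ this[unfolded expansion]]
    show "\<forall>b'\<in>N. g b' = (if b' \<in> M then Wcoef s t n m a b b' c u else 0)"
      using independent vanish by (simp add: M_def N_def finite_parity_interval)
  qed
  from expansion independent unique show ?thesis
    unfolding M_def N_def mem_Collect_eq by blast
qed

end
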